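(* Let $(m,n)$ be relatively prime non-negative integers, $\mathscr{L}$ an $(m,n)$-periodic higher spin vertex configuration and $\mathcal{A}=\mathcal{A}(\mathscr{L})$. Let $\underline{i}=i_1\cdots i_\ell$ be a finite sequence with entries in $\{1,2\}$ and $\lambda\in\mathbb{Z}$. Then the following are equivalent: (i) $X(\underline{i})^\ast X(\underline{i})$ (an element of $\mathbb{C}[H]$) belongs to the principal ideal $(H-\lambda)$ of $\mathbb{C}[H]$; (ii) the based face path $\bar\pi(\underline{i},\lambda)$ intersects an edge in $\overline{\mathscr{L}}$.
   Context: Noncommutative Kleinian fiber product: $\tilde{\mathcal{A}}_{\alpha_1,\alpha_2}(p_1,p_2)$ is generated by $H,X_1^\pm,X_2^\pm$ with relations ($i=1,2$) $HX_i^\pm-X_i^\pm H=\pm\alpha_iX_i^\pm$, $X_i^+X_i^-=p_i(H-\alpha_i/2)$, $X_i^-X_i^+=p_i(H+\alpha_i/2)$, $X_1^+X_2^-=X_2^-X_1^+$, $X_1^-X_2^+=X_2^+X_1^-$; $\mathcal{A}_{\alpha_1,\alpha_2}(p_1,p_2)$ is its quotient by the ideal of all $a$ with $f(H)a=0$ for some nonzero polynomial $f$. It has the anti-involution $\ast$ with $H^\ast=H$, $(X_i^\pm)^\ast=X_i^\mp$, and is $\mathbb{Z}^2$-graded ($\deg H=0$, $\deg X_i^\pm=\pm\mathbf{e}_i$) with degree-zero part $\mathbb{C}[H]$. Configurations: $E_1=\mathbb{Z}^2+(1/2,0)$, $E_2=\mathbb{Z}^2+(0,1/2)$, $E=E_1\cup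 E_2$, $V=\mathbb{Z}^2+(1/2,1/2)$, $\Gamma_{m,n}=\mathbb{Z}(m,n)$. An $(m,n)$-periodic higher spin vertex configuration is $\mathscr{L}:E\to\mathbb{N}$ with $\mathscr{L}(e+(m,n))=\mathscr{L}(e)$, $\mathscr{L}(e+k(-n,m))=0$ for $|k|\gg0$ (each $e$), and $\mathscr{L}(v-(1/2,0))+\mathscr{L}(v-(0,1/2))=\mathscr{L}(v+(1/2,0))+\mathscr{L}(v+(0,1/2))$ ($v\in V$). With $(\alpha_1,\alpha_2)=(-n,m)$: $P_i^{\mathscr{L}}(u)=\prod_{(x_1,x_2)+\Gamma_{m,n}\in E_i/\Gamma_{m,n}}(u-(x_1\alpha_1+x_2\alpha_2))^{\mathscr{L}(x_1,x_2)}$, $\mathcal{A}(\mathscr{L})=\mathcal{A}_{-n,m}(P_1^{\mathscr{L}},P_2^{\mathscr{L}})$. For $e=(x_1,x_2)\in E_i$, $[e]=\{a\in\mathbb{R}^2:a_i=x_i,|a_{3-i}-x_{3-i}|\le1/2\}$; $\mathbb{T}_{m,n}=\mathbb{R}^2/\Gamma_{m,n}$; $\overline{\mathscr{L}}$ is the image of $\bigcup_{\mathscr{L}(e)>0}[e]$ in $\mathbb{T}_{m,n}$. $X(\underline{i})=X_{i_\ell}^+\cdots X_{i_1}^+$. For $\lambda\in\mathbb{Z}$, $\bar\lambda=(x_1,x_2)+\Gamma_{m,n}$ for any $(x_1,x_2)\in\mathbb{Z}^2$ with $-nx_1+mx_2=\lambda$. The based face path $\bar\pi(\underline{i},\lambda)\subset\mathbb{T}_{m,n}$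 is the union of the segments $[\bar\lambda+\mathbf{e}_{i_1}+\cdots+\mathbf{e}_{i_{r-1}},\ \bar\lambda+\mathbf{e}_{i_1}+\cdots+\mathbf{e}_{i_r}]$, $r=1,\dots,\ell$, where $\mathbf{e}_1=(1,0)$, $\mathbf{e}_2=(0,1)$ act by translation on $\mathbb{T}_{m,n}$. *)

theory Defs
  imports "HOL-Analysis.Analysis" "HOL-Computational_Algebra.Polynomial"
begin

datatype gen = GH | GP nat | GM nat
  (* GP i = X_i^+, GM i = X_i^-; only i = 1,2 are used *)

type_synonym fa = "gen list \<Rightarrow> complex"
  (* elements of the free algebra: coefficient functions on words
     (a word [g1,...,gk] stands for the monomial g1 g2 ... gk) *)

definition fa_mult :: "fa \<Rightarrow> fa \<Rightarrow> fa" where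
  "fa_mult a b = (\<lambda>w. \<Sum>k\<le>length w. a (take k w) * b (drop k w))"

definition fa_add :: "fa \<Rightarrow> fa \<Rightarrow> fa" where
  "fa_add a b = (\<lambda>w. a w + b w)"

definition fa_sub :: "fa \<Rightarrow> fa \<Rightarrow> fa" where
  "fa_sub a b = (\<lambda>w. a w - b w)"

definition fa_scale :: "complex \<Rightarrow> fa \<Rightarrow> fa" where
  "fa_scale c a = (\<lambda>w. c * a w)"

definition fa_zero :: fa where
  "fa_zero = (\<lambda>w. 0)"

definition fa_mono :: "gen list \<Rightarrow> fa" where
  "fa_mono u = (\<lambda>w. if w = u then 1 else 0)"

definition poly_H :: "complex poly \<Rightarrow> fa" where
  "poly_H f = (\<lambda>w. if w = replicate (length w) GH then coeff f (length w) else 0)"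

inductive_set fa_ideal :: "fa set \<Rightarrow> fa set" for R :: "fa set" where
  gen: "r \<in> R \<Longrightarrow> r \<in> fa_ideal R"
| zero: "fa_zero \<in> fa_ideal R"
| add: "a \<in> fa_ideal R \<Longrightarrow> b \<in> fa_ideal R \<Longrightarrow> fa_add a b \<in> fa_ideal R"
| scale: "a \<in> fa_ideal R \<Longrightarrow> fa_scale c a \<in> fa_ideal R"
| lmult: "a \<in> fa_ideal R \<Longrightarrow> fa_mult (fa_mono u) a \<in> fa_ideal R"
| rmult: "a \<in> fa_ideal R \<Longrightarrow> fa_mult a (fa_mono u) \<in> fa_ideal R"

text \<open>Defining relations of \<tilde>A_{alpha_1,alpha_2}(p_1,p_2), as elements r (meaning r = 0).\<close>
definition kf_rels :: "(nat \<Rightarrow> complex) \<Rightarrow> (nat \<Rightarrow> complex poly) \<Rightarrow> fa set" where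
  "kf_rels \<alpha> p =
    (\<Union>i\<in>{1,2::nat}.
      { fa_sub (fa_sub (fa_mono [GH, GP i]) (fa_mono [GP i, GH])) (fa_scale (\<alpha> i) (fa_mono [GP i])),
        fa_add (fa_sub (fa_mono [GH, GM i]) (fa_mono [GM i, GH])) (fa_scale (\<alpha> i) (fa_mono [GM i])),
        fa_sub (fa_mono [GP i, GM i]) (poly_H (pcompose (p i) [:- \<alpha> i / 2, 1:])),
        fa_sub (fa_mono [GM i, GP i]) (poly_H (pcompose (p i) [:\<alpha> i / 2, 1:])) })
    \<union> { fa_sub (fa_mono [GP 1, GM 2]) (fa_mono [GM 2, GP 1]),
        fa_sub (fa_mono [GM 1, GP 2]) (fa_mono [GP 2, GM 1]) }"

definition kf_tilde_ideal :: "(nat \<Rightarrow> complex) \<Rightarrow> (nat \<Rightarrow> complex poly) \<Rightarrow> fa set" where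
  "kf_tilde_ideal \<alpha> p = fa_ideal (kf_rels \<alpha> p)"

text \<open>Preimages in the free algebra of the H-torsion elements of \<tilde>A
  (elements a with f(H) a = 0 in \<tilde>A for some nonzero polynomial f).\<close>
definition kf_torsion :: "(nat \<Rightarrow> complex) \<Rightarrow> (nat \<Rightarrow> complex poly) \<Rightarrow> fa set" where
  "kf_torsion \<alpha> p = {a. finite {w. a w \<noteq> 0} \<and>
      (\<exists>f. f \<noteq> 0 \<and> fa_mult (poly_H f) a \<in> kf_tilde_ideal \<alpha> p)}"

text \<open>Kernel of the surjection free algebra \<rightarrow> A_{alpha_1,alpha_2}(p_1,p_2):
  A = \<tilde>A modulo the (ideal generated by the) H-torsion elements.\<close>
definition kf_ideal :: "(nat \<Rightarrow> complex) \<Rightarrow> (nat \<Rightarrow> complex poly) \<Rightarrow> fa set" where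
  "kf_ideal \<alpha> p = fa_ideal (kf_rels \<alpha> p \<union> kf_torsion \<alpha> p)"

fun star_gen :: "gen \<Rightarrow> gen" where
  "star_gen GH = GH" | "star_gen (GP i) = GM i" | "star_gen (GM i) = GP i"

definition star_word :: "gen list \<Rightarrow> gen list" where
  "star_word w = rev (map star_gen w)"

text \<open>X(i) = X_{i_l}^+ ... X_{i_1}^+ as a word.\<close>
definition Xword :: "nat list \<Rightarrow> gen list" where
  "Xword is = rev (map GP is)"

type_synonym pt = "real \<times> real"

definition E1 :: "pt set" where
  "E1 = {(x, y). \<exists>a b :: int. x = of_int a + 1/2 \<and> y = of_int b}"
definition E2 :: "pt set" where
  "E2 = {(x, y). \<exists>a b :: int. x = of_int a \<and> y = of_int b + 1/2}"
definition Eset :: "pt set" where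
  "Eset = E1 \<union> E2"
definition Vset :: "pt set" where
  "Vset = {(x, y). \<exists>a b :: int. x = of_int a + 1/2 \<and> y = of_int b + 1/2}"

definition Ei :: "nat \<Rightarrow> pt set" where
  "Ei i = (if i = 1 then E1 else E2)"

definition periodic_config :: "nat \<Rightarrow> nat \<Rightarrow> (pt \<Rightarrow> nat) \<Rightarrow> bool" where
  "periodic_config m n L \<longleftrightarrow>
     (\<forall>e\<in>Eset. L (e + (real m, real n)) = L e) \<and>
     (\<forall>e\<in>Eset. \<exists>K::int. \<forall>k::int. \<bar>k\<bar> > K \<longrightarrow>
         L (e + (of_int k * - real n, of_int k * real m)) = 0) \<and>
     (\<forall>v\<in>Vset. L (v - (1/2, 0)) + L (v - (0, 1/2)) = L (v + (1/2, 0)) + L (v + (0, 1/2)))"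

text \<open>The class of a point in the torus T_{m,n} = R^2 / Z(m,n).\<close>
definition tcls :: "nat \<Rightarrow> nat \<Rightarrow> pt \<Rightarrow> pt set" where
  "tcls m n p = {q. \<exists>k::int. q = p + (of_int k * real m, of_int k * real n)}"

text \<open>P_i^L(u), with (alpha_1, alpha_2) = (-n, m); product over E_i / Gamma_{m,n}
  (factors with exponent 0 omitted).\<close>
definition P_L :: "nat \<Rightarrow> nat \<Rightarrow> (pt \<Rightarrow> nat) \<Rightarrow> nat \<Rightarrow> complex poly" where
  "P_L m n L i =
     (\<Prod>C\<in>{C \<in> tcls m n ` Ei i. L (SOME e. e \<in> C) > 0}.
        (let e = (SOME e. e \<in> C)
         in [:- complex_of_real (fst e * (- real n) + snd e * real m), 1:] ^ L e))"

definition alphaL :: "nat \<Rightarrow> nat \<Rightarrow> nat \<Rightarrow> complex" where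
  "alphaL m n i = (if i = 1 then - of_nat n else of_nat m)"

definition edge_seg :: "pt \<Rightarrow> pt set" where
  "edge_seg e = (if e \<in> E1 then {(x, y). x = fst e \<and> \<bar>y - snd e\<bar> \<le> 1/2}
                 else {(x, y). y = snd e \<and> \<bar>x - fst e\<bar> \<le> 1/2})"

definition Lbar :: "nat \<Rightarrow> nat \<Rightarrow> (pt \<Rightarrow> nat) \<Rightarrow> pt set set" where
  "Lbar m n L = tcls m n ` (\<Union>e\<in>{e \<in> Eset. L e > 0}. edge_seg e)"

definition unitv :: "nat \<Rightarrow> pt" where
  "unitv i = (if i = 1 then (1, 0) else (0, 1))"

text \<open>A lift of \<bar>lambda: some integer point with -n x_1 + m x_2 = lambda.\<close>
definition lam_lift :: "nat \<Rightarrow> nat \<Rightarrow> int \<Rightarrow> pt" where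
  "lam_lift m n lam = (let (a, b) = (SOME ab :: int \<times> int. - int n * fst ab + int m * snd ab = lam)
                       in (of_int a, of_int b))"

definition psum :: "pt \<Rightarrow> nat list \<Rightarrow> nat \<Rightarrow> pt" where
  "psum p is r = p + (\<Sum>k<r. unitv (is ! k))"

definition face_path :: "nat \<Rightarrow> nat \<Rightarrow> nat list \<Rightarrow> int \<Rightarrow> pt set set" where
  "face_path m n is lam =
     tcls m n ` (\<Union>r\<in>{1..length is}.
        closed_segment (psum (lam_lift m n lam) is (r - 1)) (psum (lam_lift m n lam) is r))"

end

theory Submission
  imports Defs
begin

text \<open>
  Modulo the defining relations, X_i^- f(H) = f(H + alpha_i) X_i^- and X_i^- X_i^+ = p_i(H + alpha_i/2),
  so X(i)^* X(i) reduces to T(H) with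
  T(u) = prod_r p_{i_r}(u + alpha_{i_1} + ... + alpha_{i_{r-1}} + alpha_{i_r}/2);
  hence (i) holds as soon as T(lambda) = 0. Conversely, C[u]-valued functions on Z^2, on which H acts
  by u and X_i^+, X_i^- by lattice shifts combined with translations of u and polynomial coefficients,
  form a representation of the free algebra. For suitable coefficients it kills the defining relations
  (for the commutation of X_1^- with X_2^+ this is the vertex conservation law of L), and then, C[u]
  being a domain, also the H-torsion. In it X(i)^* X(i) acts by T(u), so (i) forces T(lambda) = 0.

  The roots of P_i^L are the weights -n x_1 + m x_2 of the edges e in E_i with L(e) > 0, and by
  coprimality the weight determines such an edge up to Gamma_{m,n}. The r-th factor of T vanishes at
  lambda exactly when the edge crossed by the r-th step of the face path carries a positive label,
  which is what it means for the path to meet L.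
\<close>

notation fa_mult (infixl "\<odot>" 70)

lemma fa_mult_Nil[simp]: "(a \<odot> b) [] = a [] * b []"
  by (simp add: fa_mult_def)

lemma fa_mult_Cons: "(a \<odot> b) (x # w) = a [] * b (x # w) + ((\<lambda>u. a (x # u)) \<odot> b) w"
  unfolding fa_mult_def
  by (simp add: sum.atMost_Suc_shift del: sum.atMost_Suc)

lemma fa_mult_assoc: "(a \<odot> b) \<odot> c = a \<odot> (b \<odot> c)"
proof
  fix w show "((a \<odot> b) \<odot> c) w = (a \<odot> (b \<odot> c)) w"
  proof (induction w arbitrary: a b c)
    case Nil then show ?case by simp
  next
    case (Cons x w)
    have Cons_expand: "(\<lambda>u. (a \<odot> b) (x # u)) = (\<lambda>u. a [] * b (x # u) + ((\<lambda>u. a (x # u)) \<odot> b) u)"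
      by (simp add: fa_mult_Cons)
    have lin: "((\<lambda>u. f u + g u) \<odot> c) w = (f \<odot> c) w + (g \<odot> c) w" for f g :: fa and w
      by (simp add: fa_mult_def distrib_right sum.distrib)
    have lin2: "((\<lambda>u. k * f u) \<odot> c) w = k * (f \<odot> c) w" for f :: fa and k w
      by (simp add: fa_mult_def sum_distrib_left mult.assoc)
    show ?case
      by (simp add: fa_mult_Cons Cons_expand lin lin2[where f = "\<lambda>u. b (x # u)"] Cons.IH algebra_simps)
  qed
qed

definition fa_supp :: "fa \<Rightarrow> gen list set" where "fa_supp a = {w. a w \<noteq> 0}"

definition fa_sum :: "'s set \<Rightarrow> ('s \<Rightarrow> fa) \<Rightarrow> fa" where
  "fa_sum S f = (\<lambda>w. \<Sum>s\<in>S. f s w)"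

lemma fa_mult_add_left: "fa_add a b \<odot> c = fa_add (a \<odot> c) (b \<odot> c)"
  by (simp add: fa_mult_def fa_add_def distrib_right sum.distrib)
lemma fa_mult_add_right: "c \<odot> fa_add a b = fa_add (c \<odot> a) (c \<odot> b)"
  by (simp add: fa_mult_def fa_add_def distrib_left sum.distrib)
lemma fa_mult_sub_left: "fa_sub a b \<odot> c = fa_sub (a \<odot> c) (b \<odot> c)"
  by (simp add: fa_mult_def fa_sub_def left_diff_distrib sum_subtractf)
lemma fa_mult_sub_right: "c \<odot> fa_sub a b = fa_sub (c \<odot> a) (c \<odot> b)"
  by (simp add: fa_mult_def fa_sub_def right_diff_distrib sum_subtractf)
lemma fa_mult_scale_left: "fa_scale k a \<odot> c = fa_scale k (a \<odot> c)"
  by (simp add: fa_mult_def fa_scale_def sum_distrib_left mult.assoc)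
lemma fa_mult_scale_right: "c \<odot> fa_scale k a = fa_scale k (c \<odot> a)"
  by (simp add: fa_mult_def fa_scale_def sum_distrib_left algebra_simps)
lemma fa_mult_zero_left[simp]: "fa_zero \<odot> c = fa_zero"
  by (simp add: fa_mult_def fa_zero_def)
lemma fa_mult_zero_right[simp]: "c \<odot> fa_zero = fa_zero"
  by (simp add: fa_mult_def fa_zero_def)
lemma fa_mult_sum_left: "fa_sum S f \<odot> c = fa_sum S (\<lambda>s. f s \<odot> c)"
  unfolding fa_mult_def fa_sum_def
  by (rule ext) (simp add: sum_distrib_right sum.swap[of _ S])
lemma fa_mult_sum_right: "c \<odot> fa_sum S f = fa_sum S (\<lambda>s. c \<odot> f s)"
  unfolding fa_mult_def fa_sum_def
  by (rule ext) (simp add: sum_distrib_left sum.swap[of _ S])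

lemma fa_mono_mult_apply:
  "(fa_mono u \<odot> b) w = (if take (length u) w = u then b (drop (length u) w) else 0)"
proof (induction u arbitrary: w)
  case Nil
  show ?case
  proof (induction w arbitrary: b)
    case Nil then show ?case by (simp add: fa_mono_def)
  next
    case (Cons x w)
    have "(\<lambda>u. fa_mono [] (x # u)) = fa_zero" by (simp add: fa_mono_def fa_zero_def)
    then show ?case unfolding fa_mult_Cons by (simp add: fa_mono_def, simp add: fa_zero_def)
  qed
next
  case (Cons y u)
  show ?case
  proof (cases w)
    case Nil then show ?thesis by (simp add: fa_mono_def)
  next
    case (Cons x w')
    have e: "(\<lambda>v. fa_mono (y # u) (x # v)) = (if x = y then fa_mono u else fa_zero)"
      by (auto simp: fa_mono_def fa_zero_def)
    show ?thesis
    proof (cases "x = y")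
      case True then show ?thesis using Cons.IH[of w'] by (simp add: Cons fa_mult_Cons e fa_mono_def)
    next
      case False then show ?thesis unfolding Cons fa_mult_Cons e
        by (simp add: fa_mono_def, simp add: fa_zero_def)
    qed
  qed
qed

lemma fa_mono_mult_mono: "fa_mono u \<odot> fa_mono v = fa_mono (u @ v)"
proof
  fix w show "(fa_mono u \<odot> fa_mono v) w = fa_mono (u @ v) w"
    unfolding fa_mono_mult_apply
    by (auto simp: fa_mono_def) (metis append_take_drop_id)
qed

lemma fa_mono_Nil_mult[simp]: "fa_mono [] \<odot> b = b"
  by (rule ext) (simp add: fa_mono_mult_apply)

lemma fa_mult_mono_Nil[simp]: "b \<odot> fa_mono [] = b"
proof
  fix w show "(b \<odot> fa_mono []) w = b w"
  proof (induction w arbitrary: b)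
    case Nil then show ?case by (simp add: fa_mono_def)
  next
    case (Cons x w) then show ?case by (simp add: fa_mult_Cons fa_mono_def)
  qed
qed

lemma fa_eq_sum_monos: "finite (fa_supp a) \<Longrightarrow> a = fa_sum (fa_supp a) (\<lambda>v. fa_scale (a v) (fa_mono v))"
  unfolding fa_sum_def fa_scale_def fa_mono_def fa_supp_def
  by (rule ext) (auto simp: if_distrib cong: if_cong)

lemma poly_H_eq_sum_monos: "poly_H f = fa_sum {..degree f} (\<lambda>k. fa_scale (coeff f k) (fa_mono (replicate k GH)))"
proof
  fix w
  show "poly_H f w = fa_sum {..degree f} (\<lambda>k. fa_scale (coeff f k) (fa_mono (replicate k GH))) w"
  proof (cases "w = replicate (length w) GH")
    case True
    have "fa_sum {..degree f} (\<lambda>k. fa_scale (coeff f k) (fa_mono (replicate k GH))) w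
         = (\<Sum>k\<in>{..degree f}. if k = length w then coeff f k else 0)"
    proof -
      have eq: "\<And>k. (w = replicate k GH) = (k = length w)" using True by (metis length_replicate)
      have s: "(\<Sum>s\<le>degree f. coeff f s * (if s = length w then 1 else 0)) = (\<Sum>s\<le>degree f. if s = length w then coeff f s else 0)"
        by (rule sum.cong) auto
      show ?thesis unfolding fa_sum_def fa_scale_def fa_mono_def by (simp add: eq s)
    qed
    also have "\<dots> = coeff f (length w)"
      by (auto simp: coeff_eq_0)
    finally show ?thesis using True by (simp add: poly_H_def)
  next
    case False
    then show ?thesis unfolding fa_sum_def fa_scale_def fa_mono_def poly_H_def
      by (auto intro!: sum.neutral)
  qed
qed

lemma poly_H_mult: "poly_H f \<odot> poly_H g = poly_H (f * g)"
proof
  fix w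
  show "(poly_H f \<odot> poly_H g) w = poly_H (f * g) w"
  proof (cases "w = replicate (length w) GH")
    case True
    define n where "n = length w"
    have w: "w = replicate n GH" using True n_def by simp
    show ?thesis
      unfolding fa_mult_def poly_H_def w
      by (simp add: coeff_mult min_def take_replicate drop_replicate)
  next
    case False
    have "poly_H f (take k w) * poly_H g (drop k w) = 0" for k
    proof (rule ccontr)
      assume "poly_H f (take k w) * poly_H g (drop k w) \<noteq> 0"
      then have "take k w = replicate (length (take k w)) GH" "drop k w = replicate (length (drop k w)) GH"
        by (auto simp: poly_H_def split: if_splits)
      then have "w = replicate (length (take k w)) GH @ replicate (length (drop k w)) GH"
        by (metis append_take_drop_id)
      then have "w = replicate (length w) GH" by (metis length_replicate replicate_add length_append)
      then show False using False by simp
    qed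
    then have "(poly_H f \<odot> poly_H g) w = 0" unfolding fa_mult_def by (simp only: sum.neutral_const)
    then show ?thesis using False by (simp add: poly_H_def)
  qed
qed

lemma poly_H_add: "poly_H (f + g) = fa_add (poly_H f) (poly_H g)"
  by (rule ext) (simp add: poly_H_def fa_add_def)
lemma poly_H_smult: "poly_H (smult c f) = fa_scale c (poly_H f)"
  by (rule ext) (simp add: poly_H_def fa_scale_def)
lemma poly_H_sum: "poly_H (\<Sum>s\<in>S. f s) = fa_sum S (\<lambda>s. poly_H (f s))"
  by (rule ext) (auto simp: poly_H_def fa_sum_def coeff_sum)
lemma poly_H_1: "poly_H 1 = fa_mono []"
  by (rule ext) (auto simp: poly_H_def fa_mono_def)
lemma poly_H_X: "poly_H [:0,1:] = fa_mono [GH]"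
proof
  fix w show "poly_H [:0, 1:] w = fa_mono [GH] w"
    by (cases w rule: rev_cases) (auto simp: poly_H_def fa_mono_def coeff_pCons split: nat.split)
qed

lemma fa_sum_empty[simp]: "fa_sum {} f = fa_zero"
  by (simp add: fa_sum_def fa_zero_def)
lemma fa_sum_insert: "finite S \<Longrightarrow> s \<notin> S \<Longrightarrow> fa_sum (insert s S) f = fa_add (f s) (fa_sum S f)"
  by (rule ext) (simp add: fa_sum_def fa_add_def)

lemma fa_ideal_sum: "finite S \<Longrightarrow> (\<And>s. s \<in> S \<Longrightarrow> f s \<in> fa_ideal R) \<Longrightarrow> fa_sum S f \<in> fa_ideal R"
proof (induction S rule: finite_induct)
  case empty then show ?case by (simp add: fa_ideal.zero)
next
  case (insert x F) then show ?case by (simp add: fa_sum_insert fa_ideal.add)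
qed

lemma fa_ideal_mult_left: assumes "finite (fa_supp b)" "a \<in> fa_ideal R" shows "b \<odot> a \<in> fa_ideal R"
proof -
  have "b \<odot> a = fa_sum (fa_supp b) (\<lambda>v. fa_scale (b v) (fa_mono v)) \<odot> a"
    using fa_eq_sum_monos[OF assms(1)] by simp
  also have "\<dots> = fa_sum (fa_supp b) (\<lambda>v. fa_scale (b v) (fa_mono v \<odot> a))"
    by (simp add: fa_mult_sum_left fa_mult_scale_left)
  finally show ?thesis using assms by (auto intro!: fa_ideal_sum fa_ideal.scale fa_ideal.lmult)
qed

lemma fa_ideal_mult_right: assumes "finite (fa_supp b)" "a \<in> fa_ideal R" shows "a \<odot> b \<in> fa_ideal R"
proof -
  have "a \<odot> b = a \<odot> fa_sum (fa_supp b) (\<lambda>v. fa_scale (b v) (fa_mono v))"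
    using fa_eq_sum_monos[OF assms(1)] by simp
  also have "\<dots> = fa_sum (fa_supp b) (\<lambda>v. fa_scale (b v) (a \<odot> fa_mono v))"
    by (simp add: fa_mult_sum_right fa_mult_scale_right)
  finally show ?thesis using assms by (auto intro!: fa_ideal_sum fa_ideal.scale fa_ideal.rmult)
qed

lemma fa_ideal_mono: assumes "R \<subseteq> R'" "a \<in> fa_ideal R" shows "a \<in> fa_ideal R'"
  using assms(2) by (induction rule: fa_ideal.induct) (use assms(1) in \<open>auto intro: fa_ideal.intros\<close>)

lemma finite_supp_mono: "finite (fa_supp (fa_mono u))"
  by (rule finite_subset[of _ "{u}"]) (auto simp: fa_supp_def fa_mono_def)
lemma finite_supp_scale: "finite (fa_supp a) \<Longrightarrow> finite (fa_supp (fa_scale c a))"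
  by (rule finite_subset[of _ "fa_supp a"]) (auto simp: fa_supp_def fa_scale_def)
lemma finite_supp_add: "finite (fa_supp a) \<Longrightarrow> finite (fa_supp b) \<Longrightarrow> finite (fa_supp (fa_add a b))"
  by (rule finite_subset[of _ "fa_supp a \<union> fa_supp b"]) (auto simp: fa_supp_def fa_add_def)
lemma finite_supp_sub: "finite (fa_supp a) \<Longrightarrow> finite (fa_supp b) \<Longrightarrow> finite (fa_supp (fa_sub a b))"
  by (rule finite_subset[of _ "fa_supp a \<union> fa_supp b"]) (auto simp: fa_supp_def fa_sub_def)
lemma finite_supp_zero: "finite (fa_supp fa_zero)"
  by (simp add: fa_supp_def fa_zero_def)
lemma finite_supp_sum: "finite S \<Longrightarrow> (\<And>s. s \<in> S \<Longrightarrow> finite (fa_supp (f s))) \<Longrightarrow> finite (fa_supp (fa_sum S f))"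
proof (induction S rule: finite_induct)
  case empty then show ?case by (simp add: finite_supp_zero)
next
  case (insert x F) then show ?case by (simp add: fa_sum_insert finite_supp_add)
qed
lemma finite_supp_poly_H: "finite (fa_supp (poly_H f))"
  by (subst poly_H_eq_sum_monos) (auto intro!: finite_supp_sum finite_supp_scale finite_supp_mono)
lemma finite_supp_mult: assumes "finite (fa_supp a)" "finite (fa_supp b)" shows "finite (fa_supp (a \<odot> b))"
proof (rule finite_subset[of _ "(\<lambda>(u,v). u @ v) ` (fa_supp a \<times> fa_supp b)"])
  show "fa_supp (a \<odot> b) \<subseteq> (\<lambda>(u,v). u @ v) ` (fa_supp a \<times> fa_supp b)"
  proof
    fix w assume "w \<in> fa_supp (a \<odot> b)"
    then have "(\<Sum>k\<le>length w. a (take k w) * b (drop k w)) \<noteq> 0" by (simp add: fa_supp_def fa_mult_def)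
    then obtain k where "a (take k w) * b (drop k w) \<noteq> 0" by (meson sum.neutral)
    then show "w \<in> (\<lambda>(u,v). u @ v) ` (fa_supp a \<times> fa_supp b)"
      by (auto simp: fa_supp_def intro!: image_eqI[of _ _ "(take k w, drop k w)"])
  qed
qed (use assms in auto)

definition fa_cong :: "fa set \<Rightarrow> fa \<Rightarrow> fa \<Rightarrow> bool" where
  "fa_cong R a b \<longleftrightarrow> fa_sub a b \<in> fa_ideal R"

lemma fa_cong_refl: "fa_cong R a a"
proof -
  have "fa_sub a a = fa_zero" by (rule ext) (simp add: fa_sub_def fa_zero_def)
  then show ?thesis by (simp add: fa_cong_def fa_ideal.zero)
qed
lemma fa_cong_trans [trans]: "fa_cong R a b \<Longrightarrow> fa_cong R b c \<Longrightarrow> fa_cong R a c"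
proof -
  have "fa_sub a c = fa_add (fa_sub a b) (fa_sub b c)" by (rule ext) (simp add: fa_sub_def fa_add_def)
  then show "fa_cong R a b \<Longrightarrow> fa_cong R b c \<Longrightarrow> fa_cong R a c" by (simp add: fa_cong_def fa_ideal.add)
qed
lemma fa_cong_eq_trans [trans]:
  "a = b \<Longrightarrow> fa_cong R b c \<Longrightarrow> fa_cong R a c" "fa_cong R a b \<Longrightarrow> b = c \<Longrightarrow> fa_cong R a c"
  by simp_all
lemma fa_cong_add: "fa_cong R a a' \<Longrightarrow> fa_cong R b b' \<Longrightarrow> fa_cong R (fa_add a b) (fa_add a' b')"
proof -
  have "fa_sub (fa_add a b) (fa_add a' b') = fa_add (fa_sub a a') (fa_sub b b')"
    by (rule ext) (simp add: fa_sub_def fa_add_def)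
  then show "fa_cong R a a' \<Longrightarrow> fa_cong R b b' \<Longrightarrow> fa_cong R (fa_add a b) (fa_add a' b')"
    by (simp add: fa_cong_def fa_ideal.add)
qed
lemma fa_cong_scale: "fa_cong R a a' \<Longrightarrow> fa_cong R (fa_scale c a) (fa_scale c a')"
proof -
  have "fa_sub (fa_scale c a) (fa_scale c a') = fa_scale c (fa_sub a a')"
    by (rule ext) (simp add: fa_sub_def fa_scale_def algebra_simps)
  then show "fa_cong R a a' \<Longrightarrow> fa_cong R (fa_scale c a) (fa_scale c a')"
    by (simp add: fa_cong_def fa_ideal.scale)
qed
lemma fa_cong_mult_left: "finite (fa_supp c) \<Longrightarrow> fa_cong R a b \<Longrightarrow> fa_cong R (c \<odot> a) (c \<odot> b)"
  unfolding fa_cong_def by (simp add: fa_mult_sub_right[symmetric] fa_ideal_mult_left)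
lemma fa_cong_mult_right: "finite (fa_supp c) \<Longrightarrow> fa_cong R a b \<Longrightarrow> fa_cong R (a \<odot> c) (b \<odot> c)"
  unfolding fa_cong_def by (simp add: fa_mult_sub_left[symmetric] fa_ideal_mult_right)
lemma fa_cong_sum: "finite S \<Longrightarrow> (\<And>s. s \<in> S \<Longrightarrow> fa_cong R (f s) (g s)) \<Longrightarrow> fa_cong R (fa_sum S f) (fa_sum S g)"
proof (induction S rule: finite_induct)
  case empty then show ?case by (simp add: fa_cong_refl)
next
  case (insert x F) then show ?case by (simp add: fa_sum_insert fa_cong_add)
qed

lemma pcompose_eq_sum_powers: "pcompose h (q::complex poly) = (\<Sum>k\<le>degree h. smult (coeff h k) (q ^ k))"
proof -
  have "poly (pcompose h q) = poly (\<Sum>k\<le>degree h. smult (coeff h k) (q ^ k))"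
    by (rule ext) (simp add: poly_pcompose poly_altdef[of h] poly_sum poly_power)
  then show ?thesis by (simp add: poly_eq_poly_eq_iff)
qed

section \<open>Reduction of X(i)^* X(i) modulo the relations\<close>

lemma kf_rels_Xminus_H:
  assumes "i \<in> {1,2}"
  shows "fa_cong (kf_rels \<alpha> p) (fa_mono [GM i, GH]) (fa_add (fa_mono [GH, GM i]) (fa_scale (\<alpha> i) (fa_mono [GM i])))"
proof -
  let ?r = "fa_add (fa_sub (fa_mono [GH, GM i]) (fa_mono [GM i, GH])) (fa_scale (\<alpha> i) (fa_mono [GM i]))"
  have "?r \<in> kf_rels \<alpha> p" using assms unfolding kf_rels_def by blast
  then have "fa_scale (-1) ?r \<in> fa_ideal (kf_rels \<alpha> p)" by (intro fa_ideal.scale fa_ideal.gen)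
  moreover have "fa_scale (-1) ?r = fa_sub (fa_mono [GM i, GH]) (fa_add (fa_mono [GH, GM i]) (fa_scale (\<alpha> i) (fa_mono [GM i])))"
    by (rule ext) (simp add: fa_sub_def fa_add_def fa_scale_def)
  ultimately show ?thesis by (simp add: fa_cong_def)
qed

lemma kf_rels_Xminus_Xplus:
  assumes "i \<in> {1,2}"
  shows "fa_cong (kf_rels \<alpha> p) (fa_mono [GM i, GP i]) (poly_H (pcompose (p i) [:\<alpha> i / 2, 1:]))"
proof -
  have "fa_sub (fa_mono [GM i, GP i]) (poly_H (pcompose (p i) [:\<alpha> i / 2, 1:])) \<in> kf_rels \<alpha> p"
    using assms unfolding kf_rels_def by blast
  then show ?thesis by (simp add: fa_cong_def fa_ideal.gen)
qed

lemma poly_H_mult_H_plus_const: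
  "poly_H f \<odot> fa_add (fa_mono [GH, g]) (fa_scale c (fa_mono [g])) = poly_H (f * [:c, 1:]) \<odot> fa_mono [g]"
proof -
  have H_g: "poly_H f \<odot> fa_mono [GH, g] = poly_H (f * [:0, 1:]) \<odot> fa_mono [g]"
    by (simp only: poly_H_mult[symmetric] poly_H_X fa_mult_assoc fa_mono_mult_mono append.simps)
  have "poly_H f \<odot> fa_add (fa_mono [GH, g]) (fa_scale c (fa_mono [g]))
      = fa_add (poly_H (f * [:0, 1:]) \<odot> fa_mono [g]) (poly_H (smult c f) \<odot> fa_mono [g])"
    by (simp only: fa_mult_add_right fa_mult_scale_right H_g poly_H_smult fa_mult_scale_left)
  also have "\<dots> = poly_H (f * [:0, 1:] + smult c f) \<odot> fa_mono [g]"
    by (simp only: poly_H_add fa_mult_add_left)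
  also have "f * [:0, 1:] + smult c f = f * [:c, 1:]"
    by (simp add: algebra_simps)
  finally show ?thesis .
qed

lemma Xminus_H_power_cong:
  assumes "i \<in> {1,2}"
  shows "fa_cong (kf_rels \<alpha> p) (fa_mono [GM i] \<odot> fa_mono (replicate k GH))
           (poly_H ([:\<alpha> i, 1:] ^ k) \<odot> fa_mono [GM i])"
proof (induction k)
  case 0 then show ?case by (simp add: poly_H_1 fa_cong_refl)
next
  case (Suc k)
  let ?R = "kf_rels \<alpha> p" and ?f = "poly_H ([:\<alpha> i, 1:] ^ k)"
  have "fa_mono [GM i] \<odot> fa_mono (replicate (Suc k) GH) = (fa_mono [GM i] \<odot> fa_mono (replicate k GH)) \<odot> fa_mono [GH]"
    by (simp add: fa_mult_assoc fa_mono_mult_mono replicate_append_same)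
  also have "fa_cong ?R \<dots> ((?f \<odot> fa_mono [GM i]) \<odot> fa_mono [GH])"
    by (rule fa_cong_mult_right[OF finite_supp_mono Suc.IH])
  also have "\<dots> = ?f \<odot> fa_mono [GM i, GH]"
    by (simp add: fa_mult_assoc fa_mono_mult_mono)
  also have "fa_cong ?R \<dots> (?f \<odot> fa_add (fa_mono [GH, GM i]) (fa_scale (\<alpha> i) (fa_mono [GM i])))"
    by (rule fa_cong_mult_left[OF finite_supp_poly_H kf_rels_Xminus_H[OF assms]])
  also have "\<dots> = poly_H ([:\<alpha> i, 1:] ^ Suc k) \<odot> fa_mono [GM i]"
    by (simp add: poly_H_mult_H_plus_const mult.commute)
  finally show ?case .
qed

lemma Xminus_poly_H_cong:
  assumes "i \<in> {1,2}"
  shows "fa_cong (kf_rels \<alpha> p) (fa_mono [GM i] \<odot> poly_H h)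
           (poly_H (pcompose h [:\<alpha> i, 1:]) \<odot> fa_mono [GM i])"
proof -
  let ?R = "kf_rels \<alpha> p" and ?q = "[:\<alpha> i, 1:]"
  have a: "fa_mono [GM i] \<odot> poly_H h
      = fa_sum {..degree h} (\<lambda>k. fa_scale (coeff h k) (fa_mono [GM i] \<odot> fa_mono (replicate k GH)))"
    by (subst poly_H_eq_sum_monos) (simp only: fa_mult_sum_right fa_mult_scale_right)
  have b: "poly_H (pcompose h ?q) \<odot> fa_mono [GM i]
      = fa_sum {..degree h} (\<lambda>k. fa_scale (coeff h k) (poly_H (?q ^ k) \<odot> fa_mono [GM i]))"
    by (simp only: pcompose_eq_sum_powers poly_H_sum poly_H_smult fa_mult_sum_left fa_mult_scale_left)
  show ?thesis unfolding a b
    by (intro fa_cong_sum fa_cong_scale Xminus_H_power_cong[OF assms]) simp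
qed

fun XstarX_poly :: "(nat \<Rightarrow> complex) \<Rightarrow> (nat \<Rightarrow> complex poly) \<Rightarrow> nat list \<Rightarrow> complex poly" where
  "XstarX_poly \<alpha> p [] = 1"
| "XstarX_poly \<alpha> p (i # is) = pcompose (XstarX_poly \<alpha> p is) [:\<alpha> i, 1:] * pcompose (p i) [:\<alpha> i / 2, 1:]"

lemma XstarX_word_Cons: "star_word (Xword (i # is)) @ Xword (i # is) = GM i # (star_word (Xword is) @ Xword is) @ [GP i]"
  by (simp add: star_word_def Xword_def)

lemma XstarX_cong_poly_H:
  assumes "set is \<subseteq> {1,2}"
  shows "fa_cong (kf_rels \<alpha> p) (fa_mono (star_word (Xword is) @ Xword is)) (poly_H (XstarX_poly \<alpha> p is))"
  using assms
proof (induction "is")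
  case Nil then show ?case by (simp add: star_word_def Xword_def poly_H_1 fa_cong_refl)
next
  case (Cons i "is")
  let ?R = "kf_rels \<alpha> p" and ?v = "star_word (Xword is) @ Xword is"
  let ?T = "XstarX_poly \<alpha> p is"
  have i: "i \<in> {1,2}" and IH: "fa_cong ?R (fa_mono ?v) (poly_H ?T)" using Cons by auto
  have "fa_mono (star_word (Xword (i # is)) @ Xword (i # is)) = (fa_mono [GM i] \<odot> fa_mono ?v) \<odot> fa_mono [GP i]"
    by (simp only: XstarX_word_Cons fa_mono_mult_mono append.simps)
  also have "fa_cong ?R \<dots> ((fa_mono [GM i] \<odot> poly_H ?T) \<odot> fa_mono [GP i])"
    by (intro fa_cong_mult_right fa_cong_mult_left finite_supp_mono IH)
  also have "fa_cong ?R \<dots> ((poly_H (pcompose ?T [:\<alpha> i, 1:]) \<odot> fa_mono [GM i]) \<odot> fa_mono [GP i])"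
    by (intro fa_cong_mult_right finite_supp_mono Xminus_poly_H_cong i)
  also have "\<dots> = poly_H (pcompose ?T [:\<alpha> i, 1:]) \<odot> fa_mono [GM i, GP i]"
    by (simp only: fa_mult_assoc fa_mono_mult_mono append.simps)
  also have "fa_cong ?R \<dots> (poly_H (pcompose ?T [:\<alpha> i, 1:]) \<odot> poly_H (pcompose (p i) [:\<alpha> i / 2, 1:]))"
    by (intro fa_cong_mult_left finite_supp_poly_H kf_rels_Xminus_Xplus i)
  also have "\<dots> = poly_H (XstarX_poly \<alpha> p (i # is))"
    by (simp only: poly_H_mult XstarX_poly.simps)
  finally show ?case .
qed

lemma XstarX_poly_root_iff:
  "poly (XstarX_poly \<alpha> p is) z = 0 \<longleftrightarrow>
     (\<exists>r<length is. poly (p (is ! r)) (z + (\<Sum>k<r. \<alpha> (is ! k)) + \<alpha> (is ! r) / 2) = 0)"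
proof (induction "is" arbitrary: z)
  case Nil then show ?case by simp
next
  case (Cons i "is")
  have "poly (XstarX_poly \<alpha> p (i # is)) z = 0 \<longleftrightarrow>
      poly (XstarX_poly \<alpha> p is) (z + \<alpha> i) = 0 \<or> poly (p i) (z + \<alpha> i / 2) = 0"
    by (simp add: poly_pcompose add.commute)
  also have "\<dots> \<longleftrightarrow> (\<exists>r<length (i # is). poly (p ((i # is) ! r)) (z + (\<Sum>k<r. \<alpha> ((i # is) ! k)) + \<alpha> ((i # is) ! r) / 2) = 0)"
  proof -
    have "(\<exists>r<length (i # is). poly (p ((i # is) ! r)) (z + (\<Sum>k<r. \<alpha> ((i # is) ! k)) + \<alpha> ((i # is) ! r) / 2) = 0)
      \<longleftrightarrow> poly (p i) (z + \<alpha> i / 2) = 0 \<or>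
          (\<exists>r<length is. poly (p (is ! r)) (z + (\<Sum>k<Suc r. \<alpha> ((i # is) ! k)) + \<alpha> (is ! r) / 2) = 0)"
      by (auto simp: less_Suc_eq_0_disj)
    also have "(\<lambda>r. \<Sum>k<Suc r. \<alpha> ((i # is) ! k)) = (\<lambda>r. \<alpha> i + (\<Sum>k<r. \<alpha> (is ! k)))"
      by (rule ext) (simp only: sum.lessThan_Suc_shift nth_Cons_0 nth_Cons_Suc)
    finally show ?thesis using Cons.IH[of "z + \<alpha> i"] by (auto simp: add_ac)
  qed
  finally show ?case .
qed

section \<open>A representation on lattice functions\<close>

type_synonym lfun = "int \<times> int \<Rightarrow> complex poly"

definition translate :: "complex \<Rightarrow> complex poly \<Rightarrow> complex poly" where
  "translate c s = pcompose s [:- c, 1:]"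

lemma translate_mult: "translate c (f * g) = translate c f * translate c g" by (simp add: translate_def pcompose_mult)
lemma translate_smult: "translate c (smult k f) = smult k (translate c f)" by (simp add: translate_def pcompose_smult)
lemma translate_sum: "translate c (\<Sum>s\<in>S. f s) = (\<Sum>s\<in>S. translate c (f s))" by (simp add: translate_def pcompose_sum)
lemma translate_pCons0: "translate c (pCons 0 y) = pCons 0 (translate c y) - smult c (translate c y)"
  by (simp add: translate_def pcompose_pCons)
lemma translate_translate: "translate c (translate d f) = translate (c + d) f"
  by (simp add: translate_def pcompose_assoc[symmetric] pcompose_pCons algebra_simps)
lemma translate_0[simp]: "translate 0 f = f" by (simp add: translate_def)
lemma translate_1[simp]: "translate c 1 = 1" by (simp add: translate_def pcompose_1)
lemma translate_zero[simp]: "translate c 0 = 0" by (simp add: translate_def)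

lemma smult_sum_right: "smult k (\<Sum>s\<in>S. f s) = (\<Sum>s\<in>S. smult k (f s))"
  by (induct S rule: infinite_finite_induct) (auto simp: smult_add_right)

definition move :: "nat \<Rightarrow> int \<Rightarrow> int \<times> int \<Rightarrow> int \<times> int" where
  "move i s e = (if i = 1 then (fst e + s, snd e) else (fst e, snd e + s))"

lemma move_inv1[simp]: "move i 1 (move i (-1) e) = e" by (simp add: move_def)
lemma move_inv2[simp]: "move i (-1) (move i 1 e) = e" by (simp add: move_def)
lemma move_comm12: "move (Suc 0) s (move 2 t e) = move 2 t (move (Suc 0) s e)" by (auto simp: move_def)

fun act_gen :: "(nat \<Rightarrow> complex) \<Rightarrow> (nat \<Rightarrow> complex poly) \<Rightarrow> (nat \<Rightarrow> complex poly) \<Rightarrow> gen \<Rightarrow> lfun \<Rightarrow> lfun" where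
  "act_gen \<alpha> a b GH \<psi> = (\<lambda>e. [:0,1:] * \<psi> e)"
| "act_gen \<alpha> a b (GP i) \<psi> = (\<lambda>e. a i * translate (\<alpha> i) (\<psi> (move i (-1) e)))"
| "act_gen \<alpha> a b (GM i) \<psi> = (\<lambda>e. b i * translate (- \<alpha> i) (\<psi> (move i 1 e)))"

fun act_word :: "(nat \<Rightarrow> complex) \<Rightarrow> (nat \<Rightarrow> complex poly) \<Rightarrow> (nat \<Rightarrow> complex poly) \<Rightarrow> gen list \<Rightarrow> lfun \<Rightarrow> lfun" where
  "act_word \<alpha> a b [] \<psi> = \<psi>"
| "act_word \<alpha> a b (g # w) \<psi> = act_gen \<alpha> a b g (act_word \<alpha> a b w \<psi>)"

lemma act_word_append: "act_word \<alpha> a b (u @ v) \<psi> = act_word \<alpha> a b u (act_word \<alpha> a b v \<psi>)"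
  by (induction u) auto

lemma act_gen_sum: "act_gen \<alpha> a b g (\<lambda>e. \<Sum>s\<in>S. smult (c s) (\<psi>s s e)) = (\<lambda>e. \<Sum>s\<in>S. smult (c s) (act_gen \<alpha> a b g (\<psi>s s) e))"
  by (cases g) (auto simp: sum_distrib_left translate_sum translate_smult)

lemma act_word_sum: "act_word \<alpha> a b w (\<lambda>e. \<Sum>s\<in>S. smult (c s) (\<psi>s s e)) = (\<lambda>e. \<Sum>s\<in>S. smult (c s) (act_word \<alpha> a b w (\<psi>s s) e))"
  by (induction w) (auto simp: act_gen_sum)

definition act :: "(nat \<Rightarrow> complex) \<Rightarrow> (nat \<Rightarrow> complex poly) \<Rightarrow> (nat \<Rightarrow> complex poly) \<Rightarrow> fa \<Rightarrow> lfun \<Rightarrow> lfun" where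
  "act \<alpha> a b x \<psi> e = (\<Sum>w\<in>fa_supp x. smult (x w) (act_word \<alpha> a b w \<psi> e))"

lemma act_eq_sum_over: "finite S \<Longrightarrow> fa_supp x \<subseteq> S \<Longrightarrow> act \<alpha> a b x \<psi> e = (\<Sum>w\<in>S. smult (x w) (act_word \<alpha> a b w \<psi> e))"
  unfolding act_def by (rule sum.mono_neutral_left) (auto simp: fa_supp_def)

lemma act_add: "finite (fa_supp x) \<Longrightarrow> finite (fa_supp y) \<Longrightarrow> act \<alpha> a b (fa_add x y) \<psi> e = act \<alpha> a b x \<psi> e + act \<alpha> a b y \<psi> e"
  by (subst (1 2 3) act_eq_sum_over[of "fa_supp x \<union> fa_supp y"])
    (auto simp: fa_supp_def fa_add_def smult_add_left sum.distrib)

lemma act_sub: "finite (fa_supp x) \<Longrightarrow> finite (fa_supp y) \<Longrightarrow> act \<alpha> a b (fa_sub x y) \<psi> e = act \<alpha> a b x \<psi> e - act \<alpha> a b y \<psi> e"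
  by (subst (1 2 3) act_eq_sum_over[of "fa_supp x \<union> fa_supp y"])
    (auto simp: fa_supp_def fa_sub_def smult_diff_left sum_subtractf)

lemma act_scale: "finite (fa_supp x) \<Longrightarrow> act \<alpha> a b (fa_scale k x) \<psi> e = smult k (act \<alpha> a b x \<psi> e)"
  by (subst (1 2) act_eq_sum_over[of "fa_supp x"])
    (auto simp: fa_supp_def fa_scale_def smult_sum_right)

lemma act_zero: "act \<alpha> a b fa_zero \<psi> e = 0"
  by (simp add: act_def fa_supp_def fa_zero_def)

lemma act_sum: "finite S \<Longrightarrow> (\<And>s. s \<in> S \<Longrightarrow> finite (fa_supp (f s))) \<Longrightarrow>
   act \<alpha> a b (fa_sum S f) \<psi> e = (\<Sum>s\<in>S. act \<alpha> a b (f s) \<psi> e)"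
proof (induction S rule: finite_induct)
  case empty then show ?case by (simp add: act_zero)
next
  case (insert x F) then show ?case by (simp add: fa_sum_insert act_add finite_supp_sum)
qed

lemma act_mono: "act \<alpha> a b (fa_mono u) \<psi> e = act_word \<alpha> a b u \<psi> e"
  by (subst act_eq_sum_over[of "{u}"]) (auto simp: fa_supp_def fa_mono_def)

lemma act_mono_mult: assumes "finite (fa_supp x)"
  shows "act \<alpha> a b (fa_mono u \<odot> x) \<psi> = act_word \<alpha> a b u (act \<alpha> a b x \<psi>)"
proof
  fix e
  have "fa_mono u \<odot> x = fa_sum (fa_supp x) (\<lambda>v. fa_scale (x v) (fa_mono (u @ v)))"
    by (subst fa_eq_sum_monos[OF assms]) (simp add: fa_mult_sum_right fa_mult_scale_right fa_mono_mult_mono)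
  then have "act \<alpha> a b (fa_mono u \<odot> x) \<psi> e = (\<Sum>v\<in>fa_supp x. smult (x v) (act_word \<alpha> a b (u @ v) \<psi> e))"
    using assms by (simp add: act_sum finite_supp_scale finite_supp_mono act_scale act_mono)
  also have "\<dots> = act_word \<alpha> a b u (act \<alpha> a b x \<psi>) e"
    unfolding act_def act_word_append by (simp add: act_word_sum)
  finally show "act \<alpha> a b (fa_mono u \<odot> x) \<psi> e = act_word \<alpha> a b u (act \<alpha> a b x \<psi>) e" .
qed

lemma act_mult_mono: assumes "finite (fa_supp x)"
  shows "act \<alpha> a b (x \<odot> fa_mono u) \<psi> = act \<alpha> a b x (act_word \<alpha> a b u \<psi>)"
proof
  fix e
  have "x \<odot> fa_mono u = fa_sum (fa_supp x) (\<lambda>v. fa_scale (x v) (fa_mono (v @ u)))"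
    by (subst fa_eq_sum_monos[OF assms]) (simp add: fa_mult_sum_left fa_mult_scale_left fa_mono_mult_mono)
  then have "act \<alpha> a b (x \<odot> fa_mono u) \<psi> e = (\<Sum>v\<in>fa_supp x. smult (x v) (act_word \<alpha> a b (v @ u) \<psi> e))"
    using assms by (simp add: act_sum finite_supp_scale finite_supp_mono act_scale act_mono)
  then show "act \<alpha> a b (x \<odot> fa_mono u) \<psi> e = act \<alpha> a b x (act_word \<alpha> a b u \<psi>) e"
    by (simp add: act_word_append act_def)
qed

lemma act_word_replicate_H: "act_word \<alpha> a b (replicate k GH) \<psi> = (\<lambda>e. [:0,1:] ^ k * \<psi> e)"
  by (induction k) (auto simp: mult.assoc)

lemma act_poly_H_mult: assumes "finite (fa_supp x)"
  shows "act \<alpha> a b (poly_H f \<odot> x) \<psi> e = f * act \<alpha> a b x \<psi> e"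
proof -
  have "poly_H f \<odot> x = fa_sum {..degree f} (\<lambda>k. fa_scale (coeff f k) (fa_mono (replicate k GH) \<odot> x))"
    by (subst poly_H_eq_sum_monos) (simp add: fa_mult_sum_left fa_mult_scale_left)
  then have "act \<alpha> a b (poly_H f \<odot> x) \<psi> e = (\<Sum>k\<le>degree f. smult (coeff f k) ([:0,1:] ^ k * act \<alpha> a b x \<psi> e))"
    using assms by (simp add: act_sum finite_supp_scale finite_supp_mono finite_supp_mult act_scale act_mono_mult act_word_replicate_H)
  also have "\<dots> = (\<Sum>k\<le>degree f. monom (coeff f k) k) * act \<alpha> a b x \<psi> e"
    by (simp add: monom_altdef sum_distrib_right)
  finally show ?thesis by (simp add: poly_as_sum_of_monoms)
qed

lemma act_poly_H: "act \<alpha> a b (poly_H f) \<psi> e = f * \<psi> e"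
  using act_poly_H_mult[of "fa_mono []" \<alpha> a b f \<psi> e] by (simp add: finite_supp_mono act_mono)

lemma act_word_zero: "act_word \<alpha> a b u (\<lambda>e. 0) = (\<lambda>e. 0)"
proof (induction u)
  case (Cons g u) then show ?case by (cases g) auto
qed simp

definition acts_by_zero :: "(nat \<Rightarrow> complex) \<Rightarrow> (nat \<Rightarrow> complex poly) \<Rightarrow> (nat \<Rightarrow> complex poly) \<Rightarrow> fa \<Rightarrow> bool" where
  "acts_by_zero \<alpha> a b x \<longleftrightarrow> finite (fa_supp x) \<and> (\<forall>\<psi> e. act \<alpha> a b x \<psi> e = 0)"

lemma fa_ideal_acts_by_zero:
  assumes "\<And>r. r \<in> R \<Longrightarrow> acts_by_zero \<alpha> a b r" and "x \<in> fa_ideal R"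
  shows "acts_by_zero \<alpha> a b x"
  using assms(2) unfolding acts_by_zero_def
proof (induction rule: fa_ideal.induct)
  case (gen r) then show ?case using assms(1) unfolding acts_by_zero_def by blast
next
  case zero then show ?case by (simp add: finite_supp_zero act_zero)
next
  case (add x y) then show ?case by (simp add: finite_supp_add act_add)
next
  case (scale x c) then show ?case by (simp add: finite_supp_scale act_scale)
next
  case (lmult x u)
  then have "\<And>\<psi>. act \<alpha> a b x \<psi> = (\<lambda>e. 0)" by auto
  with lmult show ?case by (simp add: finite_supp_mult finite_supp_mono act_mono_mult act_word_zero)
next
  case (rmult x u) then show ?case by (simp add: finite_supp_mult finite_supp_mono act_mult_mono)
qed

text \<open>The conditions under which every defining relation acts by zero.\<close>
definition rep_cond :: "(nat \<Rightarrow> complex) \<Rightarrow> (nat \<Rightarrow> complex poly) \<Rightarrow> (nat \<Rightarrow> complex poly) \<Rightarrow> (nat \<Rightarrow> complex poly) \<Rightarrow> bool" where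
  "rep_cond \<alpha> a b p \<longleftrightarrow>
     (\<forall>i\<in>{1,2}. a i * translate (\<alpha> i) (b i) = pcompose (p i) [:- \<alpha> i / 2, 1:]
            \<and> b i * translate (- \<alpha> i) (a i) = pcompose (p i) [:\<alpha> i / 2, 1:])
   \<and> a 1 * translate (\<alpha> 1) (b 2) = b 2 * translate (- \<alpha> 2) (a 1)
   \<and> b 1 * translate (- \<alpha> 1) (a 2) = a 2 * translate (\<alpha> 2) (b 1)"

lemma kf_rels_acts_by_zero:
  assumes c: "rep_cond \<alpha> a b p" and r: "r \<in> kf_rels \<alpha> p"
  shows "acts_by_zero \<alpha> a b r"
proof -
  note fin = finite_supp_mono finite_supp_sub finite_supp_add finite_supp_scale finite_supp_poly_H
  note ph = act_sub act_add act_scale act_mono act_poly_H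
  from r consider (r1) i where "i \<in> {1,2::nat}" "r = fa_sub (fa_sub (fa_mono [GH, GP i]) (fa_mono [GP i, GH])) (fa_scale (\<alpha> i) (fa_mono [GP i]))"
    | (r2) i where "i \<in> {1,2::nat}" "r = fa_add (fa_sub (fa_mono [GH, GM i]) (fa_mono [GM i, GH])) (fa_scale (\<alpha> i) (fa_mono [GM i]))"
    | (r3) i where "i \<in> {1,2::nat}" "r = fa_sub (fa_mono [GP i, GM i]) (poly_H (pcompose (p i) [:- \<alpha> i / 2, 1:]))"
    | (r4) i where "i \<in> {1,2::nat}" "r = fa_sub (fa_mono [GM i, GP i]) (poly_H (pcompose (p i) [:\<alpha> i / 2, 1:]))"
    | (r5) "r = fa_sub (fa_mono [GP 1, GM 2]) (fa_mono [GM 2, GP 1])"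
    | (r6) "r = fa_sub (fa_mono [GM 1, GP 2]) (fa_mono [GP 2, GM 1])"
    unfolding kf_rels_def by blast
  then show ?thesis
  proof cases
    case (r1 i)
    show ?thesis unfolding acts_by_zero_def r1(2)
      by (simp add: fin ph translate_mult translate_pCons0 right_diff_distrib)
  next
    case (r2 i)
    show ?thesis unfolding acts_by_zero_def r2(2)
      by (simp add: fin ph translate_mult translate_pCons0 right_diff_distrib distrib_left)
  next
    case (r3 i)
    have "a i * translate (\<alpha> i) (b i) = pcompose (p i) [:- \<alpha> i / 2, 1:]" using c r3(1) unfolding rep_cond_def by blast
    then show ?thesis unfolding acts_by_zero_def r3(2)
      by (simp add: fin ph translate_mult translate_translate mult.assoc[symmetric])
  next
    case (r4 i)
    have "b i * translate (- \<alpha> i) (a i) = pcompose (p i) [:\<alpha> i / 2, 1:]" using c r4(1) unfolding rep_cond_def by blast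
    then show ?thesis unfolding acts_by_zero_def r4(2)
      by (simp add: fin ph translate_mult translate_translate mult.assoc[symmetric])
  next
    case r5
    have e: "a 1 * translate (\<alpha> 1) (b 2) = b 2 * translate (- \<alpha> 2) (a 1)" using c by (simp add: rep_cond_def)
    show ?thesis unfolding acts_by_zero_def r5
      by (simp add: fin ph translate_mult translate_translate mult.assoc[symmetric] e[simplified] move_comm12)
  next
    case r6
    have e: "b 1 * translate (- \<alpha> 1) (a 2) = a 2 * translate (\<alpha> 2) (b 1)" using c by (simp add: rep_cond_def)
    show ?thesis unfolding acts_by_zero_def r6
      by (simp add: fin ph translate_mult translate_translate mult.assoc[symmetric] e[simplified] move_comm12)
  qed
qed

lemma act_word_XstarX:
  assumes c: "rep_cond \<alpha> a b p" and "set is \<subseteq> {1,2}"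
  shows "act_word \<alpha> a b (star_word (Xword is) @ Xword is) \<psi> = (\<lambda>e. XstarX_poly \<alpha> p is * \<psi> e)"
  using assms(2)
proof (induction "is" arbitrary: \<psi>)
  case Nil then show ?case by (simp add: star_word_def Xword_def)
next
  case (Cons i "is")
  then have i: "i \<in> {1,2}" and IH: "\<And>\<psi>. act_word \<alpha> a b (star_word (Xword is) @ Xword is) \<psi> = (\<lambda>e. XstarX_poly \<alpha> p is * \<psi> e)"
    by auto
  have bi: "b i * translate (- \<alpha> i) (a i) = pcompose (p i) [:\<alpha> i / 2, 1:]" using c i unfolding rep_cond_def by blast
  have shT: "translate (- \<alpha> i) (XstarX_poly \<alpha> p is) = pcompose (XstarX_poly \<alpha> p is) [:\<alpha> i, 1:]" by (simp add: translate_def)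
  show ?case
  proof
    fix e
    have "act_word \<alpha> a b (star_word (Xword (i # is)) @ Xword (i # is)) \<psi> e
       = b i * translate (- \<alpha> i) (XstarX_poly \<alpha> p is) * translate (- \<alpha> i) (a i) * \<psi> e"
    proof -
      have "star_word (Xword (i # is)) @ Xword (i # is) = [GM i] @ (star_word (Xword is) @ Xword is) @ [GP i]"
        by (simp add: XstarX_word_Cons)
      then have "act_word \<alpha> a b (star_word (Xword (i # is)) @ Xword (i # is)) \<psi>
          = act_word \<alpha> a b [GM i] (act_word \<alpha> a b (star_word (Xword is) @ Xword is) (act_word \<alpha> a b [GP i] \<psi>))"
        by (simp only: act_word_append)
      then show ?thesis by (simp add: IH translate_mult translate_translate mult.assoc)
    qed
    also have "\<dots> = XstarX_poly \<alpha> p (i # is) * \<psi> e"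
      by (simp only: XstarX_poly.simps shT bi[symmetric] mult_ac)
    finally show "act_word \<alpha> a b (star_word (Xword (i # is)) @ Xword (i # is)) \<psi> e = XstarX_poly \<alpha> p (i # is) * \<psi> e" .
  qed
qed

lemma kf_torsion_acts_by_zero:
  assumes c: "rep_cond \<alpha> a b p" and x: "x \<in> kf_torsion \<alpha> p"
  shows "acts_by_zero \<alpha> a b x"
proof -
  from x obtain f where fin: "finite (fa_supp x)" and f: "f \<noteq> 0" and I: "poly_H f \<odot> x \<in> kf_tilde_ideal \<alpha> p"
    unfolding kf_torsion_def fa_supp_def by auto
  have "acts_by_zero \<alpha> a b (poly_H f \<odot> x)"
    using fa_ideal_acts_by_zero[OF kf_rels_acts_by_zero[OF c]] I unfolding kf_tilde_ideal_def by blast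
  then have "\<forall>\<psi> e. act \<alpha> a b (poly_H f \<odot> x) \<psi> e = 0" unfolding acts_by_zero_def by blast
  then have "f * act \<alpha> a b x \<psi> e = 0" for \<psi> e using act_poly_H_mult[OF fin] by metis
  then show ?thesis using f fin unfolding acts_by_zero_def by simp
qed

lemma kf_ideal_acts_by_zero:
  assumes c: "rep_cond \<alpha> a b p" and x: "x \<in> kf_ideal \<alpha> p"
  shows "acts_by_zero \<alpha> a b x"
  using fa_ideal_acts_by_zero[of "kf_rels \<alpha> p \<union> kf_torsion \<alpha> p" \<alpha> a b x]
    kf_rels_acts_by_zero[OF c] kf_torsion_acts_by_zero[OF c] x
  unfolding kf_ideal_def by blast

lemma XstarX_in_kf_ideal_iff_root:
  assumes c: "rep_cond \<alpha> a b p" and "is": "set is \<subseteq> {1,2}"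
  shows "(\<exists>q :: complex poly.
            fa_sub (fa_mult (fa_mono (star_word (Xword is))) (fa_mono (Xword is)))
                   (poly_H ([:- z, 1:] * q))
            \<in> kf_ideal \<alpha> p) \<longleftrightarrow> poly (XstarX_poly \<alpha> p is) z = 0"
proof
  assume "\<exists>q. fa_sub (fa_mono (star_word (Xword is)) \<odot> fa_mono (Xword is)) (poly_H ([:- z, 1:] * q)) \<in> kf_ideal \<alpha> p"
  then obtain q where q: "fa_sub (fa_mono (star_word (Xword is)) \<odot> fa_mono (Xword is)) (poly_H ([:- z, 1:] * q)) \<in> kf_ideal \<alpha> p"
    by blast
  define \<psi>0 :: lfun where "\<psi>0 = (\<lambda>e. if e = (0,0) then 1 else 0)"
  have "act \<alpha> a b (fa_sub (fa_mono (star_word (Xword is)) \<odot> fa_mono (Xword is)) (poly_H ([:- z, 1:] * q))) \<psi>0 (0,0) = 0"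
    using kf_ideal_acts_by_zero[OF c q] unfolding acts_by_zero_def by blast
  then have "XstarX_poly \<alpha> p is = [:- z, 1:] * q"
    by (simp add: fa_mono_mult_mono act_sub finite_supp_mono finite_supp_poly_H act_mono act_poly_H act_word_XstarX[OF c "is"] \<psi>0_def)
  then show "poly (XstarX_poly \<alpha> p is) z = 0" by simp
next
  assume "poly (XstarX_poly \<alpha> p is) z = 0"
  then obtain q where q: "XstarX_poly \<alpha> p is = [:- z, 1:] * q" by (auto simp: poly_eq_0_iff_dvd elim!: dvdE)
  have "fa_cong (kf_rels \<alpha> p) (fa_mono (star_word (Xword is) @ Xword is)) (poly_H (XstarX_poly \<alpha> p is))"
    by (rule XstarX_cong_poly_H[OF "is"])
  then have "fa_sub (fa_mono (star_word (Xword is)) \<odot> fa_mono (Xword is)) (poly_H ([:- z, 1:] * q)) \<in> kf_ideal \<alpha> p"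
    unfolding fa_cong_def q fa_mono_mult_mono kf_ideal_def by (rule fa_ideal_mono[rotated]) blast
  then show "\<exists>q. fa_sub (fa_mono (star_word (Xword is)) \<odot> fa_mono (Xword is)) (poly_H ([:- z, 1:] * q)) \<in> kf_ideal \<alpha> p"
    by blast
qed

section \<open>Edge weights\<close>

definition weight :: "nat \<Rightarrow> nat \<Rightarrow> pt \<Rightarrow> real" where
  "weight m n e = fst e * (- real n) + snd e * real m"

abbreviation cweight :: "nat \<Rightarrow> nat \<Rightarrow> pt \<Rightarrow> complex" where
  "cweight m n e \<equiv> complex_of_real (weight m n e)"

lemma weight_add: "weight m n (e + f) = weight m n e + weight m n f"
  by (simp add: weight_def algebra_simps)

lemma weight_int: "weight m n (of_int a, of_int b) = of_int (- int n * a + int m * b)"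
  by (simp add: weight_def algebra_simps)

lemma coprime_weight_eq_1:
  assumes "coprime m n"
  obtains x y :: int where "- int n * x + int m * y = 1"
proof -
  have "gcd (int m) (int n) = 1" using assms by (metis coprime_iff_gcd_eq_1 coprime_int_iff)
  then obtain u v :: int where "u * int m + v * int n = 1" using bezout_int[of "int m" "int n"] by auto
  then show ?thesis using that[of "- v" u] by (simp add: algebra_simps)
qed

lemma coprime_kernel_multiple:
  fixes m n :: nat and d1 d2 :: int
  assumes "coprime m n" "- int n * d1 + int m * d2 = 0"
  shows "\<exists>k::int. d1 = k * int m \<and> d2 = k * int n"
proof -
  have cop: "coprime (int m) (int n)" using assms(1) by simp
  have "int m dvd int n * d1" using assms(2) by (metis add.commute add_diff_cancel_right' diff_0 dvd_minus_iff dvd_triv_left minus_mult_left)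
  then have "int m dvd d1" using cop coprime_dvd_mult_right_iff by blast
  then obtain k where k: "d1 = int m * k" by (auto elim: dvdE)
  show ?thesis
  proof (cases "m = 0")
    case True
    then have "n = 1" using assms(1) by simp
    then show ?thesis using k True assms(2) by (intro exI[of _ d2]) simp
  next
    case False
    have "int m * d2 = int m * (k * int n)" using assms(2) k by (simp add: algebra_simps)
    then have "d2 = k * int n" using False by simp
    then show ?thesis using k by (intro exI[of _ k]) simp
  qed
qed

definition base_edge :: "nat \<Rightarrow> pt" where "base_edge i = (if i = 1 then (1/2, 0) else (0, 1/2))"

lemma Ei_iff_base_edge: "e \<in> Ei i \<longleftrightarrow> (\<exists>a b :: int. e = base_edge i + (of_int a, of_int b))"
  by (auto simp: Ei_def E1_def E2_def base_edge_def add.commute)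

lemma base_edge_Ei: "base_edge i \<in> Ei i"
  unfolding Ei_iff_base_edge by (auto intro!: exI[of _ 0] simp: zero_prod_def[symmetric])

lemma Ei_shift:
  assumes "e \<in> Ei i" shows "e + (of_int a, of_int b) \<in> Ei i"
proof -
  obtain a' b' :: int where "e = base_edge i + (of_int a', of_int b')"
    using assms unfolding Ei_iff_base_edge by blast
  then have "e + (of_int a, of_int b) = base_edge i + (of_int (a' + a), of_int (b' + b))"
    by (simp add: algebra_simps)
  then show ?thesis unfolding Ei_iff_base_edge by blast
qed

lemma Ei_diff_integral:
  assumes "e \<in> Ei i" "e' \<in> Ei i"
  obtains d1 d2 :: int where "e' = e + (of_int d1, of_int d2)"
proof -
  obtain a b a' b' :: int where "e = base_edge i + (of_int a, of_int b)" "e' = base_edge i + (of_int a', of_int b')"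
    using assms unfolding Ei_iff_base_edge by blast
  then have "e' = e + (of_int (a' - a), of_int (b' - b))" by (simp add: algebra_simps)
  then show ?thesis by (rule that)
qed

lemma Ei_sub_Eset: "Ei i \<subseteq> Eset" by (auto simp: Ei_def Eset_def)

lemma Eset_shift: "e \<in> Eset \<Longrightarrow> e + (of_int a, of_int b) \<in> Eset"
  using Ei_shift[of e 1] Ei_shift[of e 2] by (auto simp: Eset_def Ei_def)

lemma periodic_config_shift:
  assumes p: "periodic_config m n L" and e: "e \<in> Eset"
  shows "L (e + (of_int k * real m, of_int k * real n)) = L e"
proof -
  let ?e = "\<lambda>k::int. e + (of_int k * real m, of_int k * real n)"
  have step: "L (?e (k + 1)) = L (?e k)" for k
  proof -
    have "?e k \<in> Eset" using Eset_shift[OF e, of "k * int m" "k * int n"] by simp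
    then have "L (?e k + (real m, real n)) = L (?e k)" using p unfolding periodic_config_def by blast
    moreover have "?e (k + 1) = ?e k + (real m, real n)" by (simp add: algebra_simps)
    ultimately show ?thesis by metis
  qed
  show ?thesis
  proof (induction k rule: int_induct[where k = 0])
    case base then show ?case by (simp add: zero_prod_def[symmetric])
  next
    case (step1 k) then show ?case using step[of k] by simp
  next
    case (step2 k) then show ?case using step[of "k - 1"] by simp
  qed
qed

lemma same_weight_same_class:
  assumes cop: "coprime m n" and p: "periodic_config m n L"
    and e: "e \<in> Ei i" and e': "e' \<in> Ei i" and v: "weight m n e = weight m n e'"
  shows "L e' = L e" and "e' \<in> tcls m n e"
proof -
  obtain d1 d2 :: int where d: "e' = e + (of_int d1, of_int d2)" using Ei_diff_integral[OF e e'] by blast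
  have "real_of_int (- int n * d1 + int m * d2) = 0" using v d by (simp add: weight_add weight_int)
  then have "- int n * d1 + int m * d2 = 0" by linarith
  then obtain k :: int where k: "d1 = k * int m" "d2 = k * int n" using coprime_kernel_multiple[OF cop] by blast
  have e'': "e' = e + (of_int k * real m, of_int k * real n)" using d k by simp
  show "L e' = L e" unfolding e'' by (rule periodic_config_shift[OF p]) (use e Ei_sub_Eset in auto)
  show "e' \<in> tcls m n e" unfolding tcls_def e'' by auto
qed

text \<open>The multiplicity of z as a root of P_i^L: the label of any edge in E_i of weight z
  (these edges are all equivalent under Gamma_{m,n}).\<close>
definition root_mult :: "nat \<Rightarrow> nat \<Rightarrow> (pt \<Rightarrow> nat) \<Rightarrow> nat \<Rightarrow> complex \<Rightarrow> nat" where
  "root_mult m n L i z = (if \<exists>e\<in>Ei i. cweight m n e = z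
      then L (SOME e. e \<in> Ei i \<and> cweight m n e = z) else 0)"

lemma root_mult_weight:
  assumes cop: "coprime m n" and p: "periodic_config m n L" and e: "e \<in> Ei i"
  shows "root_mult m n L i (cweight m n e) = L e"
proof -
  let ?P = "\<lambda>e'. e' \<in> Ei i \<and> cweight m n e' = cweight m n e"
  have "?P (SOME e'. ?P e')" by (rule someI[of ?P e]) (use e in auto)
  then have "L (SOME e'. ?P e') = L e"
    using same_weight_same_class(1)[OF cop p e, of "SOME e'. ?P e'"] by simp
  then show ?thesis using e unfolding root_mult_def by auto
qed

lemma root_mult_eq_0: "\<not> (\<exists>e\<in>Ei i. cweight m n e = z) \<Longrightarrow> root_mult m n L i z = 0"
  unfolding root_mult_def by auto

lemma finite_weights_supp:
  assumes cop: "coprime m n" and p: "periodic_config m n L"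
  shows "finite (weight m n ` {e \<in> Ei i. L e > 0})"
proof -
  define N :: int where "N = int m ^ 2 + int n ^ 2"
  have "N > 0" unfolding N_def using cop by (cases "m = 0") (auto intro!: add_pos_nonneg)
  obtain x y :: int where xy: "- int n * x + int m * y = 1" using coprime_weight_eq_1[OF cop] .
  \<comment> \<open>fk r k has weight weight m n (base_edge i) + r + k N; the decay hypothesis bounds k for fixed r.\<close>
  define er :: "int \<Rightarrow> pt" where "er r = base_edge i + (of_int (r * x), of_int (r * y))" for r
  define fk :: "int \<Rightarrow> int \<Rightarrow> pt" where "fk r k = er r + (of_int k * - real n, of_int k * real m)" for r k
  have fk_E: "fk r k \<in> Ei i" for r k
    unfolding fk_def er_def using Ei_shift[OF Ei_shift[OF base_edge_Ei, of i "r * x" "r * y"], of "- k * int n" "k * int m"]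
    by (simp add: add.assoc)
  have weight_fk: "weight m n (fk r k) = weight m n (base_edge i) + of_int (r + k * N)" for r k
  proof -
    have "weight m n (fk r k) = weight m n (base_edge i) + of_int (r * (- int n * x + int m * y) + k * N)"
      unfolding fk_def er_def weight_add weight_int by (simp add: weight_def N_def power2_eq_square algebra_simps)
    then show ?thesis unfolding xy by simp
  qed
  have "er r \<in> Eset" for r
    using fk_E[of r 0] Ei_sub_Eset unfolding fk_def by (auto simp: zero_prod_def[symmetric])
  then have "\<forall>r. \<exists>K::int. \<forall>k::int. \<bar>k\<bar> > K \<longrightarrow> L (fk r k) = 0"
    using p unfolding periodic_config_def fk_def by blast
  then obtain K where K: "\<And>r k. \<bar>k\<bar> > K r \<Longrightarrow> L (fk r k) = 0"
    by metis
  have "weight m n ` {e \<in> Ei i. L e > 0} \<subseteq> (\<Union>r\<in>{0..<N}. (\<lambda>k. weight m n (fk r k)) ` {- K r..K r})"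
  proof
    fix z assume "z \<in> weight m n ` {e \<in> Ei i. L e > 0}"
    then obtain e where e: "e \<in> Ei i" "L e > 0" "z = weight m n e" by auto
    obtain d1 d2 :: int where d: "e = base_edge i + (of_int d1, of_int d2)"
      using Ei_diff_integral[OF base_edge_Ei e(1)] by blast
    define j where "j = - int n * d1 + int m * d2"
    define r k where "r = j mod N" and "k = j div N"
    have r: "r \<in> {0..<N}" unfolding r_def using \<open>N > 0\<close> by simp
    have "weight m n (fk r k) = weight m n e"
      unfolding weight_fk d weight_add weight_int r_def k_def j_def by simp
    then have "L (fk r k) = L e" using same_weight_same_class(1)[OF cop p fk_E e(1)] by simp
    then have "\<bar>k\<bar> \<le> K r" using K[of r k] e(2) by force
    with r \<open>weight m n (fk r k) = weight m n e\<close> show "z \<in> (\<Union>r\<in>{0..<N}. (\<lambda>k. weight m n (fk r k)) ` {- K r..K r})"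
      using e(3) by (auto intro!: bexI[of _ r] image_eqI[of _ _ k])
  qed
  then show ?thesis by (rule finite_subset) auto
qed

lemma finite_root_mult:
  assumes cop: "coprime m n" and p: "periodic_config m n L"
  shows "finite {z. root_mult m n L i z > 0}"
proof (rule finite_subset)
  show "{z. root_mult m n L i z > 0} \<subseteq> complex_of_real ` weight m n ` {e \<in> Ei i. L e > 0}"
  proof
    fix z assume z: "z \<in> {z. root_mult m n L i z > 0}"
    then obtain e where e: "e \<in> Ei i" "cweight m n e = z" using root_mult_eq_0 by fastforce
    then show "z \<in> complex_of_real ` weight m n ` {e \<in> Ei i. L e > 0}"
      using z root_mult_weight[OF cop p e(1)] by auto
  qed
qed (use finite_weights_supp[OF assms] in auto)

lemma tcls_self: "e \<in> tcls m n e"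
  unfolding tcls_def by (auto intro!: exI[of _ 0] simp: zero_prod_def[symmetric])

lemma tcls_weight: "x \<in> tcls m n e \<Longrightarrow> weight m n x = weight m n e"
  unfolding tcls_def by (auto simp: weight_add) (simp add: weight_def algebra_simps)

lemma tcls_L: "periodic_config m n L \<Longrightarrow> e \<in> Eset \<Longrightarrow> x \<in> tcls m n e \<Longrightarrow> L x = L e"
  unfolding tcls_def using periodic_config_shift by blast

lemma tcls_Ei: "e \<in> Ei i \<Longrightarrow> x \<in> tcls m n e \<Longrightarrow> x \<in> Ei i"
  unfolding tcls_def using Ei_shift[of e i "_ * int m" "_ * int n"] by auto

lemma tcls_eq:
  assumes "x \<in> tcls m n e" shows "tcls m n x = tcls m n e"
proof -
  obtain k :: int where k: "x = e + (of_int k * real m, of_int k * real n)"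
    using assms unfolding tcls_def by blast
  have "x + (of_int j * real m, of_int j * real n) = e + (of_int (k + j) * real m, of_int (k + j) * real n)"
    "e + (of_int j * real m, of_int j * real n) = x + (of_int (j - k) * real m, of_int (j - k) * real n)" for j
    using k by (simp_all add: algebra_simps)
  then show ?thesis unfolding tcls_def by blast
qed

lemma tcls_some_rep:
  assumes p: "periodic_config m n L" and e: "e \<in> Ei i"
  shows "(SOME x. x \<in> tcls m n e) \<in> Ei i" "weight m n (SOME x. x \<in> tcls m n e) = weight m n e"
    "L (SOME x. x \<in> tcls m n e) = L e" "tcls m n (SOME x. x \<in> tcls m n e) = tcls m n e"
proof -
  have "(SOME x. x \<in> tcls m n e) \<in> tcls m n e" using tcls_self by (metis someI)
  then show "(SOME x. x \<in> tcls m n e) \<in> Ei i" "weight m n (SOME x. x \<in> tcls m n e) = weight m n e"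
    "L (SOME x. x \<in> tcls m n e) = L e" "tcls m n (SOME x. x \<in> tcls m n e) = tcls m n e"
    using e tcls_Ei tcls_weight tcls_L[OF p] Ei_sub_Eset tcls_eq by blast+
qed

definition root_prod :: "(complex \<Rightarrow> nat) \<Rightarrow> complex poly" where
  "root_prod \<mu> = (\<Prod>z\<in>{z. \<mu> z > 0}. [:- z, 1:] ^ \<mu> z)"

lemma root_prod_superset: "finite S \<Longrightarrow> {z. \<mu> z > 0} \<subseteq> S \<Longrightarrow> root_prod \<mu> = (\<Prod>z\<in>S. [:- z, 1:] ^ \<mu> z)"
  unfolding root_prod_def by (rule prod.mono_neutral_left) auto

lemma root_prod_mult:
  assumes "finite {z. \<mu> z > 0}" "finite {z. \<nu> z > 0}"
  shows "root_prod \<mu> * root_prod \<nu> = root_prod (\<lambda>z. \<mu> z + \<nu> z)"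
proof -
  let ?S = "{z. \<mu> z > 0} \<union> {z. \<nu> z > 0}"
  have f: "finite ?S" using assms by simp
  have "root_prod \<mu> * root_prod \<nu> = (\<Prod>z\<in>?S. [:- z, 1:] ^ \<mu> z) * (\<Prod>z\<in>?S. [:- z, 1:] ^ \<nu> z)"
    by (simp add: root_prod_superset[OF f])
  also have "\<dots> = (\<Prod>z\<in>?S. [:- z, 1:] ^ (\<mu> z + \<nu> z))"
    by (simp add: prod.distrib[symmetric] power_add)
  also have "\<dots> = root_prod (\<lambda>z. \<mu> z + \<nu> z)"
    by (rule root_prod_superset[symmetric]) (use f in auto)
  finally show ?thesis .
qed

lemma pcompose_power_left: "pcompose (p ^ k) q = (pcompose p q) ^ k"
  by (induction k) (simp_all add: pcompose_mult pcompose_1)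

lemma root_prod_shift: "pcompose (root_prod \<mu>) [:c, 1:] = root_prod (\<lambda>z. \<mu> (z + c))"
proof -
  have "pcompose (root_prod \<mu>) [:c, 1:] = (\<Prod>z\<in>{z. \<mu> z > 0}. [:- (z - c), 1:] ^ \<mu> z)"
    unfolding root_prod_def by (simp add: pcompose_prod pcompose_power_left pcompose_pCons algebra_simps)
  also have "\<dots> = (\<Prod>w\<in>{w. \<mu> (w + c) > 0}. [:- w, 1:] ^ \<mu> (w + c))"
    by (rule prod.reindex_bij_witness[of _ "\<lambda>w. w + c" "\<lambda>z. z - c"]) auto
  finally show ?thesis unfolding root_prod_def .
qed

lemma poly_root_prod_eq_0_iff: "finite {z. \<mu> z > 0} \<Longrightarrow> poly (root_prod \<mu>) w = 0 \<longleftrightarrow> \<mu> w > 0"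
  unfolding root_prod_def by (auto simp: poly_prod prod_zero_iff)

lemma bij_betw_tcls_roots:
  assumes cop: "coprime m n" and p: "periodic_config m n L"
  shows "bij_betw (\<lambda>C. cweight m n (SOME e. e \<in> C))
           {C \<in> tcls m n ` Ei i. L (SOME e. e \<in> C) > 0} {z. root_mult m n L i z > 0}"
    (is "bij_betw ?g ?S _")
proof (rule bij_betw_imageI)
  note rep = tcls_some_rep[OF p]
  show "inj_on ?g ?S"
  proof
    fix C C' assume "C \<in> ?S" "C' \<in> ?S" and eq: "?g C = ?g C'"
    then obtain e0 e1 where e0: "e0 \<in> Ei i" "C = tcls m n e0" and e1: "e1 \<in> Ei i" "C' = tcls m n e1"
      by blast
    have "e1 \<in> tcls m n e0"
      using same_weight_same_class(2)[OF cop p e0(1) e1(1)] rep[OF e0(1)] rep[OF e1(1)] eq e0 e1 by simp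
    then show "C = C'" using e0 e1 tcls_eq by metis
  qed
  show "?g ` ?S = {z. root_mult m n L i z > 0}"
  proof (intro equalityI subsetI)
    fix z assume "z \<in> ?g ` ?S"
    then obtain e0 where "e0 \<in> Ei i" "L (SOME e. e \<in> tcls m n e0) > 0" "z = ?g (tcls m n e0)"
      by blast
    then show "z \<in> {z. root_mult m n L i z > 0}" using rep root_mult_weight[OF cop p] by simp
  next
    fix z assume z: "z \<in> {z. root_mult m n L i z > 0}"
    then obtain e where e: "e \<in> Ei i" "cweight m n e = z"
      using root_mult_eq_0 by fastforce
    then have "tcls m n e \<in> ?S" and "z = ?g (tcls m n e)"
      using z rep[OF e(1)] root_mult_weight[OF cop p e(1)] by auto
    then show "z \<in> ?g ` ?S" by blast
  qed
qed

lemma P_L_eq_root_prod: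
  assumes cop: "coprime m n" and p: "periodic_config m n L"
  shows "P_L m n L i = root_prod (root_mult m n L i)"
proof -
  let ?g = "\<lambda>C. cweight m n (SOME e. e \<in> C)"
  let ?S = "{C \<in> tcls m n ` Ei i. L (SOME e. e \<in> C) > 0}"
  have "P_L m n L i = (\<Prod>C\<in>?S. [:- ?g C, 1:] ^ root_mult m n L i (?g C))"
    unfolding P_L_def
  proof (rule prod.cong[OF refl])
    fix C assume "C \<in> ?S"
    then have "(SOME e. e \<in> C) \<in> Ei i" using tcls_some_rep(1)[OF p] by blast
    then show "(let e = SOME e. e \<in> C in [:- complex_of_real (fst e * - real n + snd e * real m), 1:] ^ L e)
        = [:- ?g C, 1:] ^ root_mult m n L i (?g C)"
      unfolding Let_def using root_mult_weight[OF cop p] by (simp add: weight_def)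
  qed
  also have "\<dots> = root_prod (root_mult m n L i)"
    unfolding root_prod_def by (rule prod.reindex_bij_betw[OF bij_betw_tcls_roots[OF cop p]])
  finally show ?thesis .
qed

section \<open>The vertex identity\<close>

lemma root_mult_off_lattice:
  assumes "h \<in> Ei i" and "\<forall>a b :: int. z \<noteq> cweight m n (of_int a, of_int b)"
  shows "root_mult m n L i (z + cweight m n h) = 0"
proof (rule root_mult_eq_0, rule notI)
  assume "\<exists>e\<in>Ei i. cweight m n e = z + cweight m n h"
  then obtain e d1 d2 where "cweight m n e = z + cweight m n h" "e = h + (of_int d1, of_int d2)"
    using Ei_diff_integral[OF assms(1)] by metis
  then have "z = cweight m n (of_int d1, of_int d2)" by (simp add: weight_add)
  then show False using assms(2) by blast
qed

lemma root_mult_on_lattice: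
  assumes cop: "coprime m n" and p: "periodic_config m n L" and "h \<in> Ei i"
  shows "root_mult m n L i (cweight m n (of_int a, of_int b) + cweight m n h) = L ((of_int a, of_int b) + h)"
  using root_mult_weight[OF cop p Ei_shift[OF assms(3), of a b]] by (simp add: weight_add add.commute)

lemma root_mult_vertex_identity:
  assumes cop: "coprime m n" and p: "periodic_config m n L"
  shows "root_mult m n L 1 (z + cweight m n (1/2, 0)) + root_mult m n L 2 (z + cweight m n (1, - 1/2))
       = root_mult m n L 2 (z + cweight m n (0, - 1/2)) + root_mult m n L 1 (z + cweight m n (1/2, - 1))"
proof -
  have E: "(1/2, 0) \<in> Ei 1" "(1, - 1/2) \<in> Ei 2" "(0, - 1/2) \<in> Ei 2" "(1/2, - 1) \<in> Ei 1"
    unfolding Ei_iff_base_edge base_edge_def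
    by (auto intro!: exI[of _ 0] exI[of _ 1] exI[of _ "- 1"] simp: zero_prod_def[symmetric])
  show ?thesis
  proof (cases "\<exists>a b :: int. z = cweight m n (of_int a, of_int b)")
    case True
    then obtain a b :: int where z: "z = cweight m n (of_int a, of_int b)" by blast
    \<comment> \<open>the conservation law at the vertex (a + 1/2, b - 1/2)\<close>
    define v :: pt where "v = (of_int a + 1/2, of_int (b - 1) + 1/2)"
    have "v \<in> Vset" unfolding Vset_def v_def by blast
    then have "L (v - (1/2, 0)) + L (v - (0, 1/2)) = L (v + (1/2, 0)) + L (v + (0, 1/2))"
      using p unfolding periodic_config_def by blast
    then show ?thesis
      unfolding z using root_mult_on_lattice[OF cop p E(1)] root_mult_on_lattice[OF cop p E(2)]
        root_mult_on_lattice[OF cop p E(3)] root_mult_on_lattice[OF cop p E(4)]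
      by (simp add: v_def algebra_simps)
  next
    case False
    then show ?thesis using root_mult_off_lattice[OF E(1)] root_mult_off_lattice[OF E(2)]
        root_mult_off_lattice[OF E(3)] root_mult_off_lattice[OF E(4)] by simp
  qed
qed

lemma cweight_eq_alphaL: "cweight m n (x, y) = of_real x * alphaL m n 1 + of_real y * alphaL m n 2"
  by (simp add: weight_def alphaL_def)

text \<open>Coefficients for the representation: X_1^+ and X_2^- act without a factor. The commutation
  of X_1^- with X_2^+ then amounts to the vertex identity.\<close>
definition plus_coeff :: "nat \<Rightarrow> nat \<Rightarrow> (pt \<Rightarrow> nat) \<Rightarrow> nat \<Rightarrow> complex poly" where
  "plus_coeff m n L i = (if i = 1 then 1 else pcompose (P_L m n L 2) [:- alphaL m n 2 / 2, 1:])"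
definition minus_coeff :: "nat \<Rightarrow> nat \<Rightarrow> (pt \<Rightarrow> nat) \<Rightarrow> nat \<Rightarrow> complex poly" where
  "minus_coeff m n L i = (if i = 1 then pcompose (P_L m n L 1) [:alphaL m n 1 / 2, 1:] else 1)"

lemma translate_pcompose_linear: "translate c (pcompose f [:d, 1:]) = pcompose f [:d - c, 1:]"
  by (simp add: translate_def pcompose_assoc[symmetric] pcompose_pCons)

lemma finite_shift_support: "finite {z. \<mu> z > (0::nat)} \<Longrightarrow> finite {z. \<mu> (z + (c::complex)) > 0}"
  by (rule finite_subset[of _ "(\<lambda>w. w - c) ` {z. \<mu> z > 0}"]) (auto intro: image_eqI[of _ _ "_ + c"])

lemma rep_cond_P_L:
  assumes cop: "coprime m n" and p: "periodic_config m n L"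
  shows "rep_cond (alphaL m n) (plus_coeff m n L) (minus_coeff m n L) (P_L m n L)"
proof -
  let ?\<alpha> = "alphaL m n" and ?m1 = "root_mult m n L 1" and ?m2 = "root_mult m n L 2"
  note fin = finite_shift_support[OF finite_root_mult[OF cop p]]
  have "(\<lambda>z. ?m1 (z + ?\<alpha> 1 / 2) + ?m2 (z + (- ?\<alpha> 2 / 2 - - ?\<alpha> 1)))
      = (\<lambda>z. ?m2 (z + - ?\<alpha> 2 / 2) + ?m1 (z + (?\<alpha> 1 / 2 - ?\<alpha> 2)))"
    using root_mult_vertex_identity[OF cop p] by (simp add: cweight_eq_alphaL algebra_simps)
  then have "pcompose (P_L m n L 1) [:?\<alpha> 1 / 2, 1:] * pcompose (P_L m n L 2) [:- ?\<alpha> 2 / 2 - - ?\<alpha> 1, 1:]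
      = pcompose (P_L m n L 2) [:- ?\<alpha> 2 / 2, 1:] * pcompose (P_L m n L 1) [:?\<alpha> 1 / 2 - ?\<alpha> 2, 1:]"
    unfolding P_L_eq_root_prod[OF cop p] root_prod_shift root_prod_mult[OF fin fin] by simp
  then show ?thesis
    unfolding rep_cond_def plus_coeff_def minus_coeff_def by (simp add: translate_pcompose_linear algebra_simps)
qed

section \<open>Face paths\<close>

lemma lam_lift_integral:
  assumes "coprime m n"
  obtains a b :: int where "lam_lift m n lam = (of_int a, of_int b)" "- int n * a + int m * b = lam"
proof -
  obtain x y :: int where xy: "- int n * x + int m * y = 1" using coprime_weight_eq_1[OF assms] .
  have "- int n * (x * lam) + int m * (y * lam) = lam"
    using arg_cong[OF xy, of "\<lambda>t. t * lam"] by (simp add: algebra_simps)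
  then have ex: "\<exists>ab :: int \<times> int. - int n * fst ab + int m * snd ab = lam"
    by (intro exI[of _ "(x * lam, y * lam)"]) simp
  define ab where "ab = (SOME ab :: int \<times> int. - int n * fst ab + int m * snd ab = lam)"
  have "- int n * fst ab + int m * snd ab = lam" unfolding ab_def by (rule someI_ex[OF ex])
  moreover have "lam_lift m n lam = (of_int (fst ab), of_int (snd ab))"
    unfolding lam_lift_def ab_def[symmetric] by (simp add: case_prod_beta)
  ultimately show ?thesis using that by blast
qed

lemma psum_Suc: "psum P is (Suc r) = psum P is r + unitv (is ! r)"
  by (simp add: psum_def add.assoc)

lemma psum_integral: "\<exists>a b :: int. psum (of_int a0, of_int b0) is r = (of_int a, of_int b)"
proof (induction r)
  case 0 then show ?case by (auto simp: psum_def)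
next
  case (Suc r)
  then obtain a b :: int where ab: "psum (of_int a0, of_int b0) is r = (of_int a, of_int b)" by blast
  show ?case
  proof (cases "is ! r = 1")
    case True then show ?thesis using ab by (auto simp: psum_Suc unitv_def intro!: exI[of _ "a + 1"])
  next
    case False then show ?thesis using ab by (auto simp: psum_Suc unitv_def intro!: exI[of _ "b + 1"])
  qed
qed

lemma psum_lam_lift_integral:
  assumes "coprime m n"
  obtains a b :: int where "psum (lam_lift m n lam) is r = (of_int a, of_int b)"
  using lam_lift_integral[OF assms] psum_integral by metis

lemma weight_sum: "weight m n (\<Sum>k\<in>S. f k) = (\<Sum>k\<in>S. weight m n (f k))"
proof (induct S rule: infinite_finite_induct)
  case (insert x F) then show ?case by (simp add: weight_add)
qed (simp_all add: weight_def)

lemma base_edge_eq_half_unitv: "base_edge i = (1/2) *\<^sub>R unitv i"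
  by (simp add: base_edge_def unitv_def)

text \<open>The edge crossed by the r-th step of the path.\<close>
definition crossed_edge :: "nat \<Rightarrow> nat \<Rightarrow> nat list \<Rightarrow> int \<Rightarrow> nat \<Rightarrow> pt" where
  "crossed_edge m n is lam r = psum (lam_lift m n lam) is r + base_edge (is ! r)"

lemma cweight_crossed_edge:
  assumes "coprime m n"
  shows "cweight m n (crossed_edge m n is lam r) = of_int lam + (\<Sum>k<r. alphaL m n (is ! k)) + alphaL m n (is ! r) / 2"
proof -
  obtain a b :: int where "lam_lift m n lam = (of_int a, of_int b)" "- int n * a + int m * b = lam"
    using lam_lift_integral[OF assms] .
  then have "cweight m n (lam_lift m n lam) = of_int lam" by (simp add: weight_int)
  moreover have "cweight m n (unitv i) = alphaL m n i" "cweight m n (base_edge i) = alphaL m n i / 2" for i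
    by (simp_all add: weight_def unitv_def base_edge_def alphaL_def)
  ultimately show ?thesis
    unfolding crossed_edge_def psum_def weight_add weight_sum of_real_add of_real_sum by simp
qed

lemma crossed_edge_Ei:
  assumes "coprime m n"
  shows "crossed_edge m n is lam r \<in> Ei (is ! r)"
  using psum_lam_lift_integral[OF assms] unfolding crossed_edge_def Ei_iff_base_edge by (metis add.commute)

lemma XstarX_poly_root_iff_crossed_edge:
  assumes cop: "coprime m n" and p: "periodic_config m n L"
  shows "poly (XstarX_poly (alphaL m n) (P_L m n L) is) (of_int lam) = 0 \<longleftrightarrow>
    (\<exists>r<length is. L (crossed_edge m n is lam r) > 0)"
  unfolding XstarX_poly_root_iff cweight_crossed_edge[OF cop, symmetric] P_L_eq_root_prod[OF cop p]
    poly_root_prod_eq_0_iff[OF finite_root_mult[OF cop p]]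
  using root_mult_weight[OF cop p crossed_edge_Ei[OF cop]] by simp

lemma int_eq_if_dist_le_half:
  fixes b d :: int assumes "\<bar>(of_int b::real) - of_int d\<bar> \<le> 1/2" shows "b = d"
proof -
  have h: "of_int b - of_int d \<le> (1/2::real)" "of_int d - of_int b \<le> (1/2::real)"
    using assms abs_le_iff minus_diff_eq by metis+
  then have "real_of_int (b - d) < 1" "real_of_int (d - b) < 1" by simp_all
  then have "b - d < 1" "d - b < 1" by (simp_all only: of_int_less_1_iff)
  then show ?thesis by simp
qed

lemma int_plus_half_ne_int:
  fixes a c :: int shows "(of_int c::real) + 1/2 \<noteq> of_int a"
proof
  assume "(of_int c::real) + 1/2 = of_int a"
  then have "real_of_int (2 * c + 1) = real_of_int (2 * a)" by simp
  then have "2 * c + 1 = 2 * a" by (simp only: of_int_eq_iff)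
  then show False by presburger
qed

lemma int_plus_half_eq_plus:
  fixes a c :: int and t :: real assumes "of_int c + 1/2 = of_int a + t" "0 \<le> t" "t \<le> 1" shows "c = a"
  using int_eq_if_dist_le_half[of c a] assms by (simp add: abs_if)

lemma unit_segment_meets_edge:
  fixes a b :: int
  assumes x: "x \<in> closed_segment (of_int a, of_int b) ((of_int a, of_int b) + unitv i)"
    and e: "e \<in> Eset" and xe: "x \<in> edge_seg e"
  shows "e = (of_int a, of_int b) + base_edge i"
proof -
  obtain t :: real where t: "0 \<le> t" "t \<le> 1" "x = (1 - t) *\<^sub>R (of_int a, of_int b) + t *\<^sub>R ((of_int a, of_int b) + unitv i)"
    using x unfolding in_segment by blast
  have xt: "x = (of_int a + t * fst (unitv i), of_int b + t * snd (unitv i))"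
    unfolding t(3) by (cases "unitv i") (simp add: algebra_simps)
  consider (e1) c d :: int where "e = (of_int c + 1/2, of_int d)" "e \<in> E1"
    | (e2) c d :: int where "e = (of_int c, of_int d + 1/2)" "e \<notin> E1"
    using e unfolding Eset_def E1_def E2_def by blast
  then show ?thesis
  proof cases
    case (e1 c d)
    have xs: "fst x = of_int c + 1/2" "\<bar>snd x - of_int d\<bar> \<le> 1/2"
      using xe e1 unfolding edge_seg_def by auto
    have "i = 1"
    proof (rule ccontr)
      assume "i \<noteq> 1"
      then have "of_int c + 1/2 = (of_int a :: real)" using xs xt by (simp add: unitv_def)
      then show False using int_plus_half_ne_int by blast
    qed
    then have "of_int c + 1/2 = of_int a + t" "\<bar>of_int b - of_int d\<bar> \<le> (1/2::real)"
      using xs xt by (simp_all add: unitv_def)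
    then have "c = a" "b = d" using int_plus_half_eq_plus int_eq_if_dist_le_half t by blast+
    then show ?thesis using e1 \<open>i = 1\<close> by (simp add: base_edge_def)
  next
    case (e2 c d)
    have xs: "snd x = of_int d + 1/2" "\<bar>fst x - of_int c\<bar> \<le> 1/2"
      using xe e2 unfolding edge_seg_def by auto
    have "i \<noteq> 1"
    proof
      assume "i = 1"
      then have "of_int d + 1/2 = (of_int b :: real)" using xs xt by (simp add: unitv_def)
      then show False using int_plus_half_ne_int by blast
    qed
    then have "of_int d + 1/2 = of_int b + t" "\<bar>of_int a - of_int c\<bar> \<le> (1/2::real)"
      using xs xt by (simp_all add: unitv_def)
    then have "d = b" "a = c" using int_plus_half_eq_plus int_eq_if_dist_le_half t by blast+
    then show ?thesis using e2 \<open>i \<noteq> 1\<close> by (simp add: base_edge_def)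
  qed
qed

lemma unit_segment_class_in_Lbar:
  fixes a b :: int
  assumes p: "periodic_config m n L"
    and x: "x \<in> closed_segment (of_int a, of_int b) ((of_int a, of_int b) + unitv i)"
    and "tcls m n x \<in> Lbar m n L"
  shows "L ((of_int a, of_int b) + base_edge i) > 0"
proof -
  obtain e y where e: "e \<in> Eset" "L e > 0" and y: "y \<in> edge_seg e" "tcls m n y = tcls m n x"
    using assms(3) unfolding Lbar_def by blast
  then obtain k :: int where k: "y = x + (of_int k * real m, of_int k * real n)"
    using tcls_self[of y m n] unfolding tcls_def by auto
  let ?a = "k * int m + a" and ?b = "k * int n + b"
  let ?v = "(of_int k * real m, of_int k * real n)"
  have "y \<in> closed_segment (?v + (of_int a, of_int b)) (?v + ((of_int a, of_int b) + unitv i))"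
    unfolding closed_segment_translation using x k by (auto simp: add.commute)
  then have "y \<in> closed_segment (of_int ?a, of_int ?b) ((of_int ?a, of_int ?b) + unitv i)"
    by (simp add: add.assoc[symmetric])
  then have "e = (of_int ?a, of_int ?b) + base_edge i" by (rule unit_segment_meets_edge[OF _ e(1) y(1)])
  then have "e = (of_int a, of_int b) + base_edge i + ?v" by (simp add: algebra_simps)
  moreover have "(of_int a, of_int b) + base_edge i \<in> Eset"
    using Ei_shift[OF base_edge_Ei, of i a b] Ei_sub_Eset by (auto simp: add.commute)
  ultimately show ?thesis using periodic_config_shift[OF p] e(2) by simp
qed

lemma face_path_eq_steps:
  "face_path m n is lam = tcls m n ` (\<Union>r<length is.
     closed_segment (psum (lam_lift m n lam) is r) (psum (lam_lift m n lam) is r + unitv (is ! r)))"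
proof -
  have "{1..length is} = Suc ` {..<length is}"
    by (simp add: lessThan_atLeast0 atLeastLessThanSuc_atLeastAtMost)
  then show ?thesis unfolding face_path_def by (simp add: psum_Suc)
qed

lemma face_path_meets_Lbar_iff:
  assumes cop: "coprime m n" and p: "periodic_config m n L"
  shows "face_path m n is lam \<inter> Lbar m n L \<noteq> {} \<longleftrightarrow> (\<exists>r<length is. L (crossed_edge m n is lam r) > 0)"
proof
  assume "face_path m n is lam \<inter> Lbar m n L \<noteq> {}"
  then obtain r x where r: "r < length is" and "tcls m n x \<in> Lbar m n L"
    and "x \<in> closed_segment (psum (lam_lift m n lam) is r) (psum (lam_lift m n lam) is r + unitv (is ! r))"
    unfolding face_path_eq_steps by blast
  then show "\<exists>r<length is. L (crossed_edge m n is lam r) > 0"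
    using psum_lam_lift_integral[OF cop] unit_segment_class_in_Lbar[OF p] unfolding crossed_edge_def by metis
next
  assume "\<exists>r<length is. L (crossed_edge m n is lam r) > 0"
  then obtain r where r: "r < length is" and L: "L (crossed_edge m n is lam r) > 0" by blast
  let ?x = "crossed_edge m n is lam r" and ?P = "psum (lam_lift m n lam) is r"
  have "?x \<in> closed_segment ?P (?P + unitv (is ! r))"
    unfolding in_segment crossed_edge_def base_edge_eq_half_unitv
    by (rule exI[of _ "1/2"]) (simp add: algebra_simps, simp add: scaleR_add_left[symmetric])
  then have "tcls m n ?x \<in> face_path m n is lam" unfolding face_path_eq_steps using r by blast
  moreover have "?x \<in> Eset" using crossed_edge_Ei[OF cop, of "is" lam r] Ei_sub_Eset by blast
  then have "tcls m n ?x \<in> Lbar m n L"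
    using L unfolding Lbar_def
    by (intro imageI UN_I[of ?x]) (auto simp: edge_seg_def split: prod.splits)
  ultimately show "face_path m n is lam \<inter> Lbar m n L \<noteq> {}" by blast
qed

theorem mainTheorem15:
  fixes m n :: nat and L :: "real \<times> real \<Rightarrow> nat" and "is" :: "nat list" and lam :: int
  assumes "coprime m n"
    and "periodic_config m n L"
    and "set is \<subseteq> {1, 2}"
  shows "(\<exists>q :: complex poly.
            fa_sub (fa_mult (fa_mono (star_word (Xword is))) (fa_mono (Xword is)))
                   (poly_H ([:- of_int lam, 1:] * q))
            \<in> kf_ideal (alphaL m n) (P_L m n L))
         \<longleftrightarrow> face_path m n is lam \<inter> Lbar m n L \<noteq> {}"
  unfolding XstarX_in_kf_ideal_iff_root[OF rep_cond_P_L[OF assms(1,2)] assms(3)] XstarX_poly_root_iff_crossed_edge[OF assms(1,2)] face_path_meets_Lbar_iff[OF assms(1,2)]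
  by (rule refl)

end
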